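(* Let $a\in(-1,0)$. Then $\beta_a<\Theta_0$.
   Context: For $a\in(-1,0)$ let $\sigma(\tau)=1$ for $\tau>0$ and $\sigma(\tau)=a$ for $\tau<0$. Let $B^1(\mathbb{R})=\{u\in L^2(\mathbb{R}): u'\in L^2(\mathbb{R}),\ \tau u\in L^2(\mathbb{R})\}$. For $\xi\in\mathbb{R}$ set $\mu_a(\xi)=\inf_{u\in B^1(\mathbb{R})\setminus\{0\}}\frac{\int_{\mathbb{R}}(|u'|^2+(\xi+\sigma(\tau)\tau)^2|u|^2)\,d\tau}{\|u\|^2_{L^2(\mathbb{R})}}$ (the lowest eigenvalue of $-\frac{d^2}{d\tau^2}+(\xi+\sigma(\tau)\tau)^2$ on $L^2(\mathbb{R})$), and $\beta_a=\inf_{\xi\in\mathbb{R}}\mu_a(\xi)$. The de Gennes constant is $\Theta_0=\inf_{\xi\in\mathbb{R}}\lambda^N(\xi)$, where $\lambda^N(\xi)$ is the lowest eigenvalue of the Neumann realization of $-\frac{d^2}{d\tau^2}+(\tau+\xi)^2$ on $L^2(\mathbb{R}_+)$. *)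

theory Defs
  imports "HOL-Analysis.Analysis"
begin

definition test_on :: "real set \<Rightarrow> (real \<Rightarrow> real) \<Rightarrow> bool" where
  "test_on I \<phi> \<longleftrightarrow> (\<forall>x. \<phi> differentiable (at x)) \<and> continuous_on UNIV (deriv \<phi>) \<and>
     (\<exists>K. compact K \<and> K \<subseteq> I \<and> (\<forall>x. x \<notin> K \<longrightarrow> \<phi> x = 0))"

definition L2_on :: "real set \<Rightarrow> (real \<Rightarrow> complex) \<Rightarrow> bool" where
  "L2_on I u \<longleftrightarrow> set_borel_measurable lborel I u \<and>
     set_integrable lborel I (\<lambda>x. (cmod (u x))\<^sup>2)"

definition weak_deriv_on :: "real set \<Rightarrow> (real \<Rightarrow> complex) \<Rightarrow> (real \<Rightarrow> complex) \<Rightarrow> bool" where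
  "weak_deriv_on I u v \<longleftrightarrow> (\<forall>\<phi>. test_on I \<phi> \<longrightarrow>
     (LINT x:I|lborel. u x * complex_of_real (deriv \<phi> x)) =
       - (LINT x:I|lborel. v x * complex_of_real (\<phi> x)))"

text \<open>The magnetic step: sigma(t) = 1 for t > 0, a for t < 0 (value at 0 irrelevant).\<close>
definition sigma :: "real \<Rightarrow> real \<Rightarrow> real" where
  "sigma a t = (if t > 0 then 1 else a)"

definition B1_pair :: "real set \<Rightarrow> (real \<Rightarrow> complex) \<Rightarrow> (real \<Rightarrow> complex) \<Rightarrow> bool" where
  "B1_pair I u v \<longleftrightarrow> L2_on I u \<and> L2_on I v \<and> weak_deriv_on I u v \<and>
     L2_on I (\<lambda>t. complex_of_real t * u t)"

definition mu :: "real \<Rightarrow> real \<Rightarrow> real" where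
  "mu a \<xi> = Inf {(LINT t|lborel. (cmod (v t))\<^sup>2 + (\<xi> + sigma a t * t)\<^sup>2 * (cmod (u t))\<^sup>2)
                 / (LINT t|lborel. (cmod (u t))\<^sup>2) | u v.
                 B1_pair UNIV u v \<and> (LINT t|lborel. (cmod (u t))\<^sup>2) \<noteq> 0}"

definition beta :: "real \<Rightarrow> real" where
  "beta a = Inf (range (mu a))"

text \<open>Lowest eigenvalue of the Neumann realization on R_+ (variational characterization,
  form domain B^1(R_+) with no boundary condition).\<close>
definition lambdaN :: "real \<Rightarrow> real" where
  "lambdaN \<xi> = Inf {(LINT t:{0<..}|lborel. (cmod (v t))\<^sup>2 + (t + \<xi>)\<^sup>2 * (cmod (u t))\<^sup>2)
                 / (LINT t:{0<..}|lborel. (cmod (u t))\<^sup>2) | u v.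
                 B1_pair {0<..} u v \<and> (LINT t:{0<..}|lborel. (cmod (u t))\<^sup>2) \<noteq> 0}"

definition Theta0 :: real where
  "Theta0 = Inf (range lambdaN)"

end

(* Take a trial state u of the Neumann problem on the half-line at eta, extended by zero, and
   choose r > 0 with r^4 = -a.  Gluing the rescaled copies t |-> u (t / r) for t > 0 and
   t |-> u (-r^3 t) for t < 0 gives an element of B^1(R): by the du Bois-Reymond lemma u agrees
   with the continuous function C + int_0^t u', so both copies take the value C at 0.  The change
   of variables turns (r eta + sigma_a(t) t)^2 into r^2 (s + eta)^2 on both halves, and the Rayleigh
   quotient of the glued function for mu_a (r eta) is r^2 = sqrt (-a) times the Neumann quotient.
   Hence beta_a <= sqrt (-a) Theta_0.  A Sobolev-type bound
   ||u||^2 <= 12 (||u'||^2 + ||(t + eta) u||^2) gives Theta_0 >= 1/12 > 0, so beta_a < Theta_0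
   whenever -1 < a < 0. *)

theory Submission
  imports Defs
begin

section \<open>Test functions\<close>

lemma test_onD:
  assumes "test_on I \<phi>"
  shows test_on_has_derivative: "(\<phi> has_real_derivative deriv \<phi> x) (at x)"
    and test_on_continuous_deriv: "continuous_on UNIV (deriv \<phi>)"
    and test_on_continuous: "continuous_on UNIV \<phi>"
proof -
  show D: "(\<phi> has_real_derivative deriv \<phi> x) (at x)" for x
    using assms unfolding test_on_def by (simp add: DERIV_deriv_iff_real_differentiable)
  show "continuous_on UNIV (deriv \<phi>)" using assms unfolding test_on_def by auto
  show "continuous_on UNIV \<phi>"
    using D by (meson DERIV_isCont continuous_at_imp_continuous_on)
qed

lemma deriv_eq_0_if_vanishes_on_open:
  fixes \<phi> :: "real \<Rightarrow> real"
  assumes "open S" "x \<in> S" "\<And>y. y \<in> S \<Longrightarrow> \<phi> y = 0"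
  shows "deriv \<phi> x = 0"
proof -
  have "(\<phi> has_real_derivative 0) (at x)"
    by (rule has_field_derivative_transform_within_open[of "\<lambda>_. 0" _ _ S]) (use assms in auto)
  then show ?thesis by (rule DERIV_imp_deriv)
qed

lemma test_on_support_Icc:
  assumes "test_on I \<phi>" "is_interval I" "I \<noteq> {}"
  obtains c d where "c \<le> d" "{c..d} \<subseteq> I" "\<And>x. x \<notin> {c..d} \<Longrightarrow> \<phi> x = 0"
    "\<And>x. x \<notin> {c..d} \<Longrightarrow> deriv \<phi> x = 0"
proof -
  obtain K where K: "compact K" "K \<subseteq> I" "\<And>x. x \<notin> K \<Longrightarrow> \<phi> x = 0"
    using assms(1) unfolding test_on_def by blast
  show ?thesis
  proof (cases "K = {}")
    case True
    then have "\<phi> = (\<lambda>_. 0)" using K(3) by auto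
    moreover obtain p where "p \<in> I" using assms(3) by blast
    ultimately show ?thesis by (intro that[of p p]) auto
  next
    case False
    obtain c where c: "c \<in> K" "\<And>t. t \<in> K \<Longrightarrow> c \<le> t" using compact_attains_inf[OF K(1) False] by blast
    obtain d where d: "d \<in> K" "\<And>t. t \<in> K \<Longrightarrow> t \<le> d" using compact_attains_sup[OF K(1) False] by blast
    have outside: "\<phi> x = 0" if "x < c \<or> d < x" for x
      using that c(2) d(2) K(3) by force
    show ?thesis
    proof (rule that)
      show "c \<le> d" using c d by auto
      show "{c..d} \<subseteq> I"
        using mem_is_interval_1_I[OF assms(2)] c(1) d(1) K(2) by (meson atLeastAtMost_iff subsetD subsetI)
      show "\<phi> x = 0" if "x \<notin> {c..d}" for x using that outside by auto
      show "deriv \<phi> x = 0" if "x \<notin> {c..d}" for x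
      proof (cases "x < c")
        case True
        then show ?thesis by (intro deriv_eq_0_if_vanishes_on_open[of "{..<c}"]) (simp_all add: outside)
      next
        case False
        then show ?thesis using that
          by (intro deriv_eq_0_if_vanishes_on_open[of "{d<..}"]) (simp_all add: outside)
      qed
    qed
  qed
qed

lemma test_on_antiderivative:
  fixes g :: "real \<Rightarrow> real"
  assumes g: "continuous_on UNIV g" and cd: "c \<le> d" "{c..d} \<subseteq> I"
    and supp: "\<And>x. x \<notin> {c..d} \<Longrightarrow> g x = 0" and int0: "integral {c..d} g = 0"
  obtains \<phi> where "test_on I \<phi>" "\<And>x. deriv \<phi> x = g x"
proof -
  define \<phi> where "\<phi> x = integral {c-1..x} g" for x
  have contg: "continuous_on {a..b} g" for a b using g continuous_on_subset by blast
  have int_eq_0: "integral {a..b} g = 0" if "{a<..<b} \<inter> {c..d} = {}" for a b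
  proof -
    have "g x = 0" if "x \<in> {a<..<b}" for x
      using supp that \<open>{a<..<b} \<inter> {c..d} = {}\<close> by blast
    then have "integral {a..b} g = integral {a..b} (\<lambda>_. 0::real)"
      by (intro integral_spike[where S="{a,b}"]) auto
    then show ?thesis by simp
  qed
  have zero_left: "\<phi> y = 0" if "y < c" for y
    unfolding \<phi>_def using that by (intro int_eq_0) auto
  have zero_right: "\<phi> y = 0" if "d < y" for y
  proof -
    have "\<phi> y = integral {c-1..c} g + (integral {c..d} g + integral {d..y} g)"
      unfolding \<phi>_def using cd that integrable_continuous_real[OF contg]
      by (simp add: Henstock_Kurzweil_Integration.integral_combine)
    also have "\<dots> = 0"
      using int0 int_eq_0[of "c-1" c] int_eq_0[of d y] by fastforce
    finally show ?thesis .
  qed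
  have D: "(\<phi> has_real_derivative g x) (at x)" for x
  proof (cases "x < c")
    case True
    have "((\<lambda>_. 0) has_real_derivative g x) (at x)" using supp True by auto
    then show ?thesis
      by (rule has_field_derivative_transform_within_open[of _ _ _ "{..<c}"]) (use True zero_left in auto)
  next
    case False
    define b where "b = max x d + 1"
    have "(\<phi> has_vector_derivative g x) (at x within {c-1..b})"
      unfolding \<phi>_def by (rule integral_has_vector_derivative[OF contg]) (use False in \<open>auto simp: b_def\<close>)
    moreover have "at x within {c-1..b} = at x"
      by (rule at_within_Icc_at) (use False in \<open>auto simp: b_def\<close>)
    ultimately show ?thesis by (simp add: has_real_derivative_iff_has_vector_derivative)
  qed
  have deriv_eq: "deriv \<phi> x = g x" for x using D by (rule DERIV_imp_deriv)
  have "test_on I \<phi>"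
    unfolding test_on_def
  proof (intro conjI allI exI[of _ "{c..d}"])
    show "\<phi> differentiable at x" for x using D real_differentiable_def by blast
    show "continuous_on UNIV (deriv \<phi>)" using g deriv_eq by (simp add: fun_eq_iff[symmetric])
    show "x \<notin> {c..d} \<longrightarrow> \<phi> x = 0" for x using zero_left zero_right by force
  qed (use cd in auto)
  then show ?thesis using that deriv_eq by blast
qed

section \<open>Integrals over compact intervals\<close>

lemma square_integrable_imp_set_integrable_Icc:
  fixes u :: "real \<Rightarrow> complex"
  assumes [measurable]: "u \<in> borel_measurable borel" and "integrable lborel (\<lambda>t. (cmod (u t))\<^sup>2)"
  shows "set_integrable lborel {c..d} u"
proof (rule set_integrable_bound)
  show "set_integrable lborel {c..d} (\<lambda>t. 1 + (cmod (u t))\<^sup>2)"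
    using integrable_mult_indicator[OF _ assms(2), of "{c..d}"]
    by (intro set_integral_add(1)) (auto simp: set_integrable_def emeasure_lborel_Icc_eq)
  show "AE t in lborel. t \<in> {c..d} \<longrightarrow> norm (u t) \<le> norm (1 + (cmod (u t))\<^sup>2)"
  proof (intro AE_I2 impI)
    fix t
    have "cmod (u t) \<le> 1 + (cmod (u t))\<^sup>2"
      using sum_squares_bound[of "cmod (u t)" 1] norm_ge_zero[of "u t"]
      unfolding power2_eq_square by linarith
    then show "norm (u t) \<le> norm (1 + (cmod (u t))\<^sup>2)" by simp
  qed
qed (simp add: set_borel_measurable_def)

lemma set_integrable_Icc_mult_continuous:
  fixes v :: "real \<Rightarrow> complex"
  assumes [measurable]: "v \<in> borel_measurable borel" and vi: "set_integrable lborel {c..d} v"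
    and g: "continuous_on UNIV g"
  shows "set_integrable lborel {c..d} (\<lambda>s. v s * complex_of_real (g s))"
proof -
  have [measurable]: "g \<in> borel_measurable borel" using g by (rule borel_measurable_continuous_onI)
  obtain B where B: "\<And>x. x \<in> {c..d} \<Longrightarrow> norm (g x) \<le> B"
    using continuous_on_compact_bound[OF compact_Icc continuous_on_subset[OF g subset_UNIV]] by blast
  show ?thesis
  proof (rule set_integrable_bound)
    show "set_integrable lborel {c..d} (\<lambda>s. B * norm (v s))"
      using set_integrable_norm[OF vi] by simp
    show "set_borel_measurable lborel {c..d} (\<lambda>s. v s * complex_of_real (g s))"
      unfolding set_borel_measurable_def by measurable
    show "AE s in lborel. s \<in> {c..d} \<longrightarrow> norm (v s * complex_of_real (g s)) \<le> norm (B * norm (v s))"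
    proof (intro AE_I2 impI)
      fix s assume "s \<in> {c..d}"
      have "norm (v s * complex_of_real (g s)) = norm (g s) * norm (v s)" by (simp add: norm_mult)
      also have "\<dots> \<le> B * norm (v s)" using B[OF \<open>s \<in> {c..d}\<close>] by (rule mult_right_mono) simp
      also have "\<dots> \<le> norm (B * norm (v s))" by simp
      finally show "norm (v s * complex_of_real (g s)) \<le> norm (B * norm (v s))" .
    qed
  qed
qed

lemma integrable_continuous_supported_Icc:
  fixes g :: "real \<Rightarrow> real"
  assumes g: "continuous_on UNIV g" and supp: "\<And>x. x \<notin> {c..d} \<Longrightarrow> g x = 0"
  shows "integrable lborel g" "(LBINT t. g t) = integral {c..d} g"
proof -
  have eq: "g = (\<lambda>t. indicator {c..d} t *\<^sub>R g t)" using supp by (auto simp: indicator_def fun_eq_iff)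
  have si: "set_integrable lborel {c..d} g"
    by (rule borel_integrable_atLeastAtMost') (use g continuous_on_subset in blast)
  then show "integrable lborel g" unfolding set_integrable_def by (subst eq)
  have "(LBINT t. g t) = (LINT t:{c..d}|lborel. g t)" unfolding set_lebesgue_integral_def by (subst eq) simp
  also have "\<dots> = integral {c..d} g" by (rule set_borel_integral_eq_integral(2)[OF si])
  finally show "(LBINT t. g t) = integral {c..d} g" .
qed

lemma integrable_mult_continuous_supported_Icc:
  fixes f :: "real \<Rightarrow> complex" and g :: "real \<Rightarrow> real"
  assumes f: "f \<in> borel_measurable borel" "set_integrable lborel {c..d} f"
    and g: "continuous_on UNIV g" and supp: "\<And>x. x \<notin> {c..d} \<Longrightarrow> g x = 0"
  shows "integrable lborel (\<lambda>t. f t * complex_of_real (g t))"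
    and "(LBINT t. f t * complex_of_real (g t)) = (LINT t:{c..d}|lborel. f t * complex_of_real (g t))"
proof -
  have eq: "(\<lambda>t. f t * complex_of_real (g t)) = (\<lambda>t. indicator {c..d} t *\<^sub>R (f t * complex_of_real (g t)))"
    using supp by (auto simp: indicator_def fun_eq_iff)
  show "integrable lborel (\<lambda>t. f t * complex_of_real (g t))"
    using set_integrable_Icc_mult_continuous[OF f g] unfolding set_integrable_def by (subst eq)
  show "(LBINT t. f t * complex_of_real (g t)) = (LINT t:{c..d}|lborel. f t * complex_of_real (g t))"
    unfolding set_lebesgue_integral_def by (subst eq) simp
qed

lemma set_integral_eq_integral_if_vanishes:
  assumes "\<And>x. x \<notin> A \<Longrightarrow> f x = 0"
  shows "(LINT x:A|M. f x) = (LINT x|M. f x)"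
  unfolding set_lebesgue_integral_def
  by (intro Bochner_Integration.integral_cong) (auto simp: indicator_def assms)

lemma lborel_integral_scale:
  fixes F :: "real \<Rightarrow> 'a::{banach, second_countable_topology}"
  assumes "c \<noteq> 0" "integrable lborel F"
  shows "integrable lborel (\<lambda>x. F (c * x))" "(LBINT x. F (c * x)) = (1 / \<bar>c\<bar>) *\<^sub>R (LBINT x. F x)"
proof -
  show "integrable lborel (\<lambda>x. F (c * x))"
    using lborel_integrable_real_affine[OF assms(2) assms(1), of 0] by simp
  have "(LBINT x. F x) = \<bar>c\<bar> *\<^sub>R (LBINT x. F (0 + c * x))"
    by (rule lborel_integral_real_affine[OF assms(1)])
  then show "(LBINT x. F (c * x)) = (1 / \<bar>c\<bar>) *\<^sub>R (LBINT x. F x)"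
    using assms(1) by simp
qed

lemma lborel_integral_glue_scalings:
  fixes F :: "real \<Rightarrow> 'a::{banach, second_countable_topology}"
  assumes "0 < r" "integrable lborel F"
  shows "integrable lborel (\<lambda>t. F (t / r))" "(LBINT t. F (t / r)) = r *\<^sub>R (LBINT t. F t)"
    and "integrable lborel (\<lambda>t. F (- (r^3 * t)))" "(LBINT t. F (- (r^3 * t))) = (1 / r^3) *\<^sub>R (LBINT t. F t)"
proof -
  have "1 / r \<noteq> 0" "- (r^3) \<noteq> 0" using assms(1) by auto
  note scale1 = lborel_integral_scale[OF this(1) assms(2)] and scale2 = lborel_integral_scale[OF this(2) assms(2)]
  show "integrable lborel (\<lambda>t. F (t / r))" "(LBINT t. F (t / r)) = r *\<^sub>R (LBINT t. F t)"
    using scale1 assms(1) by simp_all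
  show "integrable lborel (\<lambda>t. F (- (r^3 * t)))" "(LBINT t. F (- (r^3 * t))) = (1 / r^3) *\<^sub>R (LBINT t. F t)"
    using scale2 assms(1) by simp_all
qed

lemma integral_glue_substitution:
  fixes w :: "real \<Rightarrow> complex" and h :: "real \<Rightarrow> real"
  assumes r: "0 < r" and w: "w \<in> borel_measurable borel" "\<And>c d. set_integrable lborel {c..d} w"
    and h: "continuous_on UNIV h" "\<And>x. x \<notin> {a..b} \<Longrightarrow> h x = 0"
  shows "integrable lborel (\<lambda>y. w y * complex_of_real (h (r * y)))"
    "integrable lborel (\<lambda>y. w y * complex_of_real (h (- (y / r^3))))"
    "integrable lborel (\<lambda>x. w (x / r) * complex_of_real (h x))"
    "(LBINT x. w (x / r) * complex_of_real (h x)) = complex_of_real r * (LBINT y. w y * complex_of_real (h (r * y)))"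
    "integrable lborel (\<lambda>x. w (- (r^3 * x)) * complex_of_real (h x))"
    "(LBINT x. w (- (r^3 * x)) * complex_of_real (h x)) = complex_of_real (1 / r^3) * (LBINT y. w y * complex_of_real (h (- (y / r^3))))"
proof -
  have cont: "continuous_on UNIV (\<lambda>y. h (r * y))" "continuous_on UNIV (\<lambda>y. h (- (y / r^3)))"
    using r by (auto intro!: continuous_on_compose2[OF h(1)] continuous_intros)
  have supp1: "h (r * y) = 0" if "y \<notin> {a / r..b / r}" for y
    using that r h(2) by (auto simp: field_simps)
  have supp2: "h (- (y / r^3)) = 0" if "y \<notin> {- (r^3 * b)..- (r^3 * a)}" for y
    using that r h(2) by (auto simp: field_simps)
  show int1: "integrable lborel (\<lambda>y. w y * complex_of_real (h (r * y)))"
    by (rule integrable_mult_continuous_supported_Icc(1)[of w "a / r" "b / r", OF w(1,2) cont(1) supp1])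
  show int2: "integrable lborel (\<lambda>y. w y * complex_of_real (h (- (y / r^3))))"
    by (rule integrable_mult_continuous_supported_Icc(1)[of w "- (r^3 * b)" "- (r^3 * a)", OF w(1,2) cont(2) supp2])
  note scale1 = lborel_integral_glue_scalings(1,2)[OF r int1]
    and scale2 = lborel_integral_glue_scalings(3,4)[OF r int2]
  show "integrable lborel (\<lambda>x. w (x / r) * complex_of_real (h x))"
    using scale1(1) r by simp
  show "(LBINT x. w (x / r) * complex_of_real (h x)) = complex_of_real r * (LBINT y. w y * complex_of_real (h (r * y)))"
    using scale1(2) r by (simp add: scaleR_conv_of_real)
  show "integrable lborel (\<lambda>x. w (- (r^3 * x)) * complex_of_real (h x))"
    using scale2(1) r by simp
  show "(LBINT x. w (- (r^3 * x)) * complex_of_real (h x)) = complex_of_real (1 / r^3) * (LBINT y. w y * complex_of_real (h (- (y / r^3))))"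
    using scale2(2) r by (simp add: scaleR_conv_of_real)
qed

lemma borel_measurable_indefinite_integral [measurable]:
  fixes v :: "real \<Rightarrow> complex"
  assumes [measurable]: "v \<in> borel_measurable borel"
  shows "(\<lambda>x. LINT s:{a..x}|lborel. v s) \<in> borel_measurable borel"
proof -
  have "(\<lambda>x. LBINT s. (if a \<le> s \<and> s \<le> x then v s else 0)) \<in> borel_measurable lborel"
    by (rule lborel.borel_measurable_lebesgue_integral) measurable
  moreover have "(\<lambda>x. LINT s:{a..x}|lborel. v s) = (\<lambda>x. LBINT s. (if a \<le> s \<and> s \<le> x then v s else 0))"
    unfolding set_lebesgue_integral_def
    by (intro ext Bochner_Integration.integral_cong) (auto simp: indicator_def)
  ultimately show ?thesis by simp
qed

lemma continuous_on_indefinite_integral: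
  fixes v :: "real \<Rightarrow> complex"
  assumes "set_integrable lborel {a..b} v"
  shows "continuous_on {a..b} (\<lambda>x. LINT s:{a..x}|lborel. v s)"
proof (rule continuous_on_eq)
  show "continuous_on {a..b} (\<lambda>x. integral {a..x} v)"
    by (rule indefinite_integral_continuous_1) (rule set_borel_integral_eq_integral(1)[OF assms])
  show "integral {a..x} v = (LINT s:{a..x}|lborel. v s)" if "x \<in> {a..b}" for x
  proof -
    have "set_integrable lborel {a..x} v" by (rule set_integrable_subset[OF assms]) (use that in auto)
    then show ?thesis by (rule set_borel_integral_eq_integral(2)[symmetric])
  qed
qed

lemma indefinite_integral_diff:
  fixes v :: "real \<Rightarrow> complex"
  assumes "set_integrable lborel {a..s} v" "a \<le> t" "t \<le> s"
  shows "(LINT r:{a..s}|lborel. v r) - (LINT r:{a..t}|lborel. v r) = (LINT r:{t<..s}|lborel. v r)"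
proof -
  have "{a..s} = {a..t} \<union> {t<..s}" using assms by auto
  moreover have "(LINT r:{a..t} \<union> {t<..s}|lborel. v r) = (LINT r:{a..t}|lborel. v r) + (LINT r:{t<..s}|lborel. v r)"
  proof (rule set_integral_Un)
    show "set_integrable lborel {a..t} v" "set_integrable lborel {t<..s} v"
      using assms by (auto intro: set_integrable_subset[OF assms(1)])
  qed auto
  ultimately show ?thesis by simp
qed

lemma integrable_triangle_product:
  fixes v :: "real \<Rightarrow> complex" and g :: "real \<Rightarrow> real"
  assumes v[measurable]: "v \<in> borel_measurable borel" and vi: "set_integrable lborel {c..d} v"
    and cont: "continuous_on UNIV g"
  shows "integrable (lborel \<Otimes>\<^sub>M lborel)
    (\<lambda>(x, s). if c \<le> s \<and> s \<le> x \<and> x \<le> d then complex_of_real (g x) * v s else 0)"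
proof -
  have [measurable]: "g \<in> borel_measurable borel" using cont by (rule borel_measurable_continuous_onI)
  obtain B where B: "\<And>x. x \<in> {c..d} \<Longrightarrow> norm (g x) \<le> B"
    using continuous_on_compact_bound[OF compact_Icc continuous_on_subset[OF cont subset_UNIV]] by blast
  define K where "K = (LINT s:{c..d}|lborel. norm (v s))"
  define F where "F x s = (if c \<le> s \<and> s \<le> x \<and> x \<le> d then complex_of_real (g x) * v s else 0)" for x s
  have [measurable]: "(\<lambda>(x, s). F x s) \<in> borel_measurable (lborel \<Otimes>\<^sub>M lborel)"
    unfolding F_def by measurable
  have F_x: "F x = (\<lambda>s. (indicator {c..d} x * g x) *\<^sub>R (indicator {c..x} s *\<^sub>R v s))" for x
    unfolding F_def by (auto simp: indicator_def scaleR_conv_of_real)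
  have v_sub: "set_integrable lborel {c..x} v" if "x \<le> d" for x
    by (rule set_integrable_subset[OF vi]) (use that in auto)
  have int_x: "integrable lborel (F x)" for x
  proof (cases "x \<le> d")
    case True
    show ?thesis
      using v_sub[OF True] unfolding F_x set_integrable_def by (rule integrable_scaleR_right)
  next
    case False
    then have "F x = (\<lambda>_. 0)" unfolding F_def by auto
    then show ?thesis by simp
  qed
  have norm_int_x: "(LBINT s. norm (F x s)) = indicator {c..d} x * (\<bar>g x\<bar> * (LINT s:{c..x}|lborel. norm (v s)))" for x
    unfolding F_x set_lebesgue_integral_def by (simp add: abs_mult mult.assoc)
  have bound: "norm (LBINT s. norm (F x s)) \<le> norm (indicator {c..d} x * (B * K))" for x
  proof (cases "x \<in> {c..d}")
    case True
    have "0 \<le> (LINT s:{c..x}|lborel. norm (v s))"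
      unfolding set_lebesgue_integral_def by (intro integral_nonneg_AE) auto
    moreover have "(LINT s:{c..x}|lborel. norm (v s)) \<le> K"
      unfolding K_def set_lebesgue_integral_def
      using True set_integrable_norm[OF v_sub[of x]] set_integrable_norm[OF vi]
      by (intro integral_mono) (auto simp: set_integrable_def indicator_def)
    ultimately show ?thesis
      using B[OF True] True unfolding norm_int_x by (auto intro!: mult_mono)
  qed (simp add: norm_int_x)
  have "integrable lborel (\<lambda>x. LBINT s. norm (F x s))"
  proof (rule Bochner_Integration.integrable_bound)
    show "integrable lborel (\<lambda>x. indicator {c..d} x * (B * K))"
      by (intro integrable_mult_left integrable_real_indicator) (auto simp: emeasure_lborel_Icc_eq)
    show "AE x in lborel. norm (LBINT s. norm (F x s)) \<le> norm (indicator {c..d} x * (B * K))"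
      using bound by simp
  qed measurable
  then have "integrable (lborel \<Otimes>\<^sub>M lborel) (\<lambda>(x, s). F x s)"
    by (intro lborel_pair.Fubini_integrable) (auto intro: int_x)
  then show ?thesis unfolding F_def .
qed

lemma integration_by_parts_indefinite_integral:
  fixes v :: "real \<Rightarrow> complex" and \<phi> \<phi>' :: "real \<Rightarrow> real"
  assumes v[measurable]: "v \<in> borel_measurable borel" and vi: "set_integrable lborel {c..d} v"
    and D: "\<And>x. (\<phi> has_real_derivative \<phi>' x) (at x)" and cont: "continuous_on UNIV \<phi>'"
  shows "(LINT x:{c..d}|lborel. complex_of_real (\<phi>' x) * (LINT s:{c..x}|lborel. v s)) =
    complex_of_real (\<phi> d) * (LINT s:{c..d}|lborel. v s) - (LINT s:{c..d}|lborel. v s * complex_of_real (\<phi> s))"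
proof -
  have cont_\<phi>: "continuous_on UNIV \<phi>" using D by (meson DERIV_isCont continuous_at_imp_continuous_on)
  define F where "F x s = (if c \<le> s \<and> s \<le> x \<and> x \<le> d then complex_of_real (\<phi>' x) * v s else 0)" for x s
  have Fubini: "(LBINT s. LBINT x. F x s) = (LBINT x. LBINT s. F x s)"
    using integrable_triangle_product[OF v vi cont] unfolding F_def by (rule lborel_pair.Fubini_integral)
  have int_s: "(LBINT x. F x s) = indicator {c..d} s *\<^sub>R ((\<phi> d - \<phi> s) *\<^sub>R v s)" for s
  proof (cases "s \<in> {c..d}")
    case True
    have "set_integrable lborel {s..d} \<phi>'"
      by (rule borel_integrable_atLeastAtMost') (use cont continuous_on_subset in blast)
    moreover have "(LBINT x. indicator {s..d} x * \<phi>' x) = \<phi> d - \<phi> s"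
      using integral_FTC_Icc_real[of s d \<phi> \<phi>'] True D cont
      by (auto simp: mult.commute continuous_on_eq_continuous_at)
    moreover have "(\<lambda>x. F x s) = (\<lambda>x. (indicator {s..d} x * \<phi>' x) *\<^sub>R v s)"
      using True unfolding F_def by (auto simp: indicator_def scaleR_conv_of_real)
    ultimately show ?thesis using True by (simp add: set_integrable_def)
  next
    case False
    then have "(\<lambda>x. F x s) = (\<lambda>_. 0)" unfolding F_def by auto
    then show ?thesis using False by simp
  qed
  have "F x = (\<lambda>s. (indicator {c..d} x * \<phi>' x) *\<^sub>R (indicator {c..x} s *\<^sub>R v s))" for x
    unfolding F_def by (auto simp: indicator_def scaleR_conv_of_real)
  then have "(LINT x:{c..d}|lborel. complex_of_real (\<phi>' x) * (LINT s:{c..x}|lborel. v s)) = (LBINT x. LBINT s. F x s)"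
    unfolding set_lebesgue_integral_def by (simp add: scaleR_conv_of_real mult.assoc)
  also have "\<dots> = (LBINT s. LBINT x. F x s)"
    by (rule Fubini[symmetric])
  also have "\<dots> = (LINT s:{c..d}|lborel. complex_of_real (\<phi> d) * v s - v s * complex_of_real (\<phi> s))"
    unfolding int_s set_lebesgue_integral_def by (simp add: scaleR_conv_of_real algebra_simps)
  also have "\<dots> = complex_of_real (\<phi> d) * (LINT s:{c..d}|lborel. v s) - (LINT s:{c..d}|lborel. v s * complex_of_real (\<phi> s))"
    using vi set_integrable_Icc_mult_continuous[OF v vi cont_\<phi>] by (simp add: set_integral_diff)
  finally show ?thesis .
qed

lemma sq_le_mult_if_bounded_by_means:
  fixes x A L :: real
  assumes "0 \<le> x" "0 \<le> A" "0 \<le> L" and bound: "\<And>l. 0 < l \<Longrightarrow> x \<le> (l * A + L / l) / 2"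
  shows "x\<^sup>2 \<le> L * A"
proof (cases "x = 0 \<or> A = 0")
  case True
  moreover have "x = 0" if "A = 0"
  proof (rule ccontr)
    assume "x \<noteq> 0"
    then have "0 < x" using assms(1) by simp
    have "x \<le> x * L / (2 * (L + 1))"
      using bound[of "(L + 1) / x"] \<open>0 < x\<close> \<open>A = 0\<close> assms(3) by (simp add: field_simps)
    also have "\<dots> < x"
      using \<open>0 < x\<close> assms(3) by (simp add: field_simps add_nonneg_pos)
    finally show False by simp
  qed
  ultimately show ?thesis using assms by auto
next
  case False
  then have "0 < x" "0 < A" using assms by auto
  have "x \<le> ((x / A) * A + L / (x / A)) / 2" using bound[of "x / A"] \<open>0 < x\<close> \<open>0 < A\<close> by simp
  also have "\<dots> = (x + L * A / x) / 2" using \<open>0 < x\<close> \<open>0 < A\<close> by (simp add: field_simps)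
  finally have "x * x \<le> L * A" using \<open>0 < x\<close> by (simp add: field_simps)
  then show ?thesis by (simp add: power2_eq_square)
qed

(* Cauchy-Schwarz, from |v| <= (l |v|^2 + 1/l) / 2 optimised over l > 0. *)
lemma norm_set_integral_Ioc_sq_le:
  fixes v :: "real \<Rightarrow> complex"
  assumes [measurable]: "v \<in> borel_measurable borel" and v2: "integrable lborel (\<lambda>t. (cmod (v t))\<^sup>2)"
    and "t \<le> s"
  shows "(cmod (LINT r:{t<..s}|lborel. v r))\<^sup>2 \<le> (s - t) * (LBINT r. (cmod (v r))\<^sup>2)"
proof -
  have vi: "set_integrable lborel {t<..s} v"
    by (rule set_integrable_subset[OF square_integrable_imp_set_integrable_Icc[OF _ v2, of t s]]) auto
  have v2i: "set_integrable lborel {t<..s} (\<lambda>r. (cmod (v r))\<^sup>2)"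
    unfolding set_integrable_def using integrable_mult_indicator[OF _ v2, of "{t<..s}"] by simp
  have one_i: "set_integrable lborel {t<..s} (\<lambda>r. 1::real)"
    unfolding set_integrable_def using \<open>t \<le> s\<close>
    by (intro integrable_scaleR_left integrable_real_indicator) auto
  define x where "x = (LINT r:{t<..s}|lborel. cmod (v r))"
  define D where "D = (LBINT r. (cmod (v r))\<^sup>2)"
  have x0: "0 \<le> x" unfolding x_def set_lebesgue_integral_def by (intro integral_nonneg_AE) auto
  have D0: "0 \<le> D" unfolding D_def by (intro integral_nonneg_AE) auto
  have "x \<le> (l * D + (s - t) / l) / 2" if "0 < l" for l
  proof -
    have pointwise: "cmod (v r) \<le> (l * (cmod (v r))\<^sup>2 + 1 / l) / 2" for r
    proof -
      have "0 \<le> (sqrt l * cmod (v r) - 1 / sqrt l)\<^sup>2" by simp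
      also have "\<dots> = l * (cmod (v r))\<^sup>2 + 1 / l - 2 * cmod (v r)"
        using \<open>0 < l\<close> by (simp add: power2_diff field_simps power_mult_distrib)
      finally show ?thesis by simp
    qed
    have "x \<le> (LINT r:{t<..s}|lborel. (l * (cmod (v r))\<^sup>2 + 1 / l) / 2)"
      unfolding x_def using set_integrable_norm[OF vi] v2i one_i pointwise
      by (intro set_integral_mono set_integrable_divide set_integral_add(1)) auto
    also have "\<dots> = (l * (LINT r:{t<..s}|lborel. (cmod (v r))\<^sup>2) + (1 / l) * (s - t)) / 2"
      using v2i one_i \<open>t \<le> s\<close> by (simp add: set_integral_add set_integral_divide_zero set_integral_const)
    also have "(LINT r:{t<..s}|lborel. (cmod (v r))\<^sup>2) \<le> D"
      unfolding D_def set_lebesgue_integral_def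
      using v2 v2i unfolding set_integrable_def by (intro integral_mono) (auto simp: indicator_def)
    finally show ?thesis using \<open>0 < l\<close> by (simp add: mult_left_mono divide_right_mono)
  qed
  then have "x\<^sup>2 \<le> (s - t) * D" using sq_le_mult_if_bounded_by_means[OF x0 D0] \<open>t \<le> s\<close> by simp
  moreover have "cmod (LINT r:{t<..s}|lborel. v r) \<le> x"
    unfolding x_def set_lebesgue_integral_def
    by (rule order_trans[OF integral_norm_bound]) (auto simp: indicator_def)
  then have "(cmod (LINT r:{t<..s}|lborel. v r))\<^sup>2 \<le> x\<^sup>2" by (simp add: power_mono)
  ultimately show ?thesis unfolding D_def by simp
qed

lemma norm_sq_indefinite_integral_le:
  fixes v :: "real \<Rightarrow> complex"
  assumes [measurable]: "v \<in> borel_measurable borel" and v2: "integrable lborel (\<lambda>t. (cmod (v t))\<^sup>2)"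
    and "0 \<le> t" "t \<le> s"
  shows "(cmod (C + (LINT r:{0..t}|lborel. v r)))\<^sup>2
    \<le> 2 * (cmod (C + (LINT r:{0..s}|lborel. v r)))\<^sup>2 + 2 * ((s - t) * (LBINT r. (cmod (v r))\<^sup>2))"
proof -
  define U where "U x = (LINT r:{0..x}|lborel. v r)" for x
  have "U s - U t = (LINT r:{t<..s}|lborel. v r)"
    unfolding U_def using assms(3,4)
    by (intro indefinite_integral_diff square_integrable_imp_set_integrable_Icc[OF _ v2]) auto
  then have diff: "(cmod (U s - U t))\<^sup>2 \<le> (s - t) * (LBINT r. (cmod (v r))\<^sup>2)"
    using norm_set_integral_Ioc_sq_le[OF assms(1) v2 \<open>t \<le> s\<close>] by simp
  have "cmod (C + U t) \<le> cmod (C + U s) + cmod (U s - U t)"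
    using norm_triangle_ineq4[of "C + U s" "U s - U t"] by (simp add: algebra_simps)
  then have "(cmod (C + U t))\<^sup>2 \<le> (cmod (C + U s) + cmod (U s - U t))\<^sup>2"
    by (intro power_mono) auto
  also have "\<dots> \<le> 2 * (cmod (C + U s))\<^sup>2 + 2 * (cmod (U s - U t))\<^sup>2"
    using sum_squares_bound[of "cmod (C + U s)" "cmod (U s - U t)"] by (simp add: power2_sum)
  finally show ?thesis using diff unfolding U_def by linarith
qed

lemma integrable_shifted_weight:
  fixes u :: "real \<Rightarrow> complex"
  assumes [measurable]: "u \<in> borel_measurable borel"
    and "integrable lborel (\<lambda>t. (cmod (u t))\<^sup>2)" "integrable lborel (\<lambda>t. t\<^sup>2 * (cmod (u t))\<^sup>2)"
  shows "integrable lborel (\<lambda>t. (t + \<eta>)\<^sup>2 * (cmod (u t))\<^sup>2)"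
proof (rule Bochner_Integration.integrable_bound)
  show "integrable lborel (\<lambda>t. 2 * (t\<^sup>2 * (cmod (u t))\<^sup>2) + 2 * \<eta>\<^sup>2 * (cmod (u t))\<^sup>2)"
    using assms by auto
  show "AE t in lborel. norm ((t + \<eta>)\<^sup>2 * (cmod (u t))\<^sup>2) \<le> norm (2 * (t\<^sup>2 * (cmod (u t))\<^sup>2) + 2 * \<eta>\<^sup>2 * (cmod (u t))\<^sup>2)"
  proof (intro AE_I2)
    fix t
    have "(t + \<eta>)\<^sup>2 \<le> 2 * t\<^sup>2 + 2 * \<eta>\<^sup>2" using sum_squares_bound[of t \<eta>] by (simp add: power2_sum)
    then have "(t + \<eta>)\<^sup>2 * (cmod (u t))\<^sup>2 \<le> (2 * t\<^sup>2 + 2 * \<eta>\<^sup>2) * (cmod (u t))\<^sup>2"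
      by (intro mult_right_mono) auto
    then show "norm ((t + \<eta>)\<^sup>2 * (cmod (u t))\<^sup>2) \<le> norm (2 * (t\<^sup>2 * (cmod (u t))\<^sup>2) + 2 * \<eta>\<^sup>2 * (cmod (u t))\<^sup>2)"
      by (simp add: algebra_simps)
  qed
qed measurable

section \<open>Weak derivatives on the half-line\<close>

definition ramp :: "nat \<Rightarrow> real \<Rightarrow> real" where
  "ramp n s = max 0 (min 1 (real (Suc n) * s))"

lemma continuous_on_ramp: "continuous_on UNIV (ramp n)"
  unfolding ramp_def by (intro continuous_intros)

lemma ramp_bounds: "0 \<le> ramp n s" "ramp n s \<le> 1"
  unfolding ramp_def by auto

lemma ramp_nonpos:
  assumes "s \<le> 0" shows "ramp n s = 0"
proof -
  have "real (Suc n) * s \<le> 0" using assms by (intro mult_nonneg_nonpos) auto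
  then show ?thesis unfolding ramp_def by (auto simp: max_def min_def)
qed

lemma ramp_tendsto: "(\<lambda>n. ramp n s) \<longlonglongrightarrow> (if 0 < s then 1 else 0)"
proof (cases "0 < s")
  case True
  obtain N where N: "1 < real N * s" using ex_less_of_nat_mult[OF True] by blast
  have "ramp n s = 1" if "N \<le> n" for n
  proof -
    have "real N * s \<le> real (Suc n) * s" using that True by (intro mult_right_mono) auto
    then show ?thesis using N unfolding ramp_def by simp
  qed
  then have "\<forall>\<^sub>F n in sequentially. ramp n s = 1" by (rule eventually_sequentiallyI)
  then show ?thesis using True by (simp add: tendsto_eventually)
qed (simp add: ramp_nonpos)

definition orthogonal_Cc_half_line :: "(real \<Rightarrow> complex) \<Rightarrow> bool" where
  "orthogonal_Cc_half_line f \<longleftrightarrow> (\<forall>g c d. continuous_on UNIV g \<and> 0 < c \<and> c \<le> d \<and> (\<forall>x. x \<notin> {c..d} \<longrightarrow> g x = 0)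
     \<longrightarrow> (LBINT t. f t * complex_of_real (g t)) = 0)"

lemma orthogonal_Cc_half_lineI:
  assumes "\<And>g c d. continuous_on UNIV g \<Longrightarrow> 0 < c \<Longrightarrow> c \<le> d \<Longrightarrow> (\<And>x. x \<notin> {c..d} \<Longrightarrow> g x = 0)
    \<Longrightarrow> (LBINT t. f t * complex_of_real (g t)) = 0"
  shows "orthogonal_Cc_half_line f"
  using assms unfolding orthogonal_Cc_half_line_def by blast

lemma orthogonal_Cc_half_lineD:
  assumes "orthogonal_Cc_half_line f" "continuous_on UNIV g" "0 < c" "c \<le> d"
    "\<And>x. x \<notin> {c..d} \<Longrightarrow> g x = 0"
  shows "(LBINT t. f t * complex_of_real (g t)) = 0"
  using assms unfolding orthogonal_Cc_half_line_def by blast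

lemma set_integral_Ioo_eq_0_if_orthogonal:
  fixes f :: "real \<Rightarrow> complex"
  assumes f[measurable]: "f \<in> borel_measurable borel"
    and loc: "\<And>c d. 0 < c \<Longrightarrow> set_integrable lborel {c..d} f"
    and orth: "orthogonal_Cc_half_line f"
    and "0 < x" "x < R"
  shows "(LINT t:{x<..<R}|lborel. f t) = 0"
proof -
  define g where "g n t = ramp n (t - x) * ramp n (R - t)" for n t
  have g_cont: "continuous_on UNIV (g n)" for n
    unfolding g_def by (intro continuous_intros continuous_on_compose2[OF continuous_on_ramp]) auto
  have g_supp: "g n t = 0" if "t \<notin> {x..R}" for n t
    using that unfolding g_def by (auto simp: ramp_nonpos)
  have "(\<lambda>n. LBINT t. f t * complex_of_real (g n t)) \<longlonglongrightarrow> (LBINT t. indicator {x<..<R} t *\<^sub>R f t)"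
  proof (rule integral_dominated_convergence)
    show "integrable lborel (\<lambda>t. indicator {x..R} t * norm (f t))"
      using set_integrable_norm[OF loc[OF \<open>0 < x\<close>, of R]] unfolding set_integrable_def by simp
    show "(\<lambda>t. f t * complex_of_real (g n t)) \<in> borel_measurable lborel" for n
      using g_cont[of n] by (measurable, rule borel_measurable_continuous_onI)
    show "AE t in lborel. norm (f t * complex_of_real (g n t)) \<le> indicator {x..R} t * norm (f t)" for n
    proof (intro AE_I2)
      fix t
      have "\<bar>g n t\<bar> \<le> 1" unfolding g_def using ramp_bounds by (simp add: abs_mult mult_le_one)
      then show "norm (f t * complex_of_real (g n t)) \<le> indicator {x..R} t * norm (f t)"
        using g_supp[of t n] by (cases "t \<in> {x..R}") (auto simp: norm_mult intro: mult_left_le)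
    qed
    show "AE t in lborel. (\<lambda>n. f t * complex_of_real (g n t)) \<longlonglongrightarrow> indicator {x<..<R} t *\<^sub>R f t"
    proof (intro AE_I2)
      fix t
      have "(\<lambda>n. g n t) \<longlonglongrightarrow> indicator {x<..<R} t"
        unfolding g_def using tendsto_mult[OF ramp_tendsto[of "t - x"] ramp_tendsto[of "R - t"]]
        by (auto simp: indicator_def)
      then show "(\<lambda>n. f t * complex_of_real (g n t)) \<longlonglongrightarrow> indicator {x<..<R} t *\<^sub>R f t"
        by (auto intro!: tendsto_intros simp: scaleR_conv_of_real mult.commute)
    qed
  qed measurable
  moreover have "(LBINT t. f t * complex_of_real (g n t)) = 0" for n
    using \<open>x < R\<close> by (intro orthogonal_Cc_half_lineD[OF orth g_cont \<open>0 < x\<close> _ g_supp]) simp_all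
  ultimately have "(\<lambda>n. 0) \<longlonglongrightarrow> (LBINT t. indicator {x<..<R} t *\<^sub>R f t)" by simp
  then show ?thesis
    unfolding set_lebesgue_integral_def using LIMSEQ_unique tendsto_const by blast
qed

(* The positive and negative parts of f have equal integrals over every tail, so they are
   densities of the same measure. *)
lemma AE_zero_if_tail_integrals_zero:
  fixes f :: "real \<Rightarrow> real"
  assumes f: "integrable lborel f" and tails: "\<And>y. (LINT t:{y<..}|lborel. f t) = 0"
  shows "AE t in lborel. f t = 0"
proof -
  have [measurable]: "f \<in> borel_measurable borel" using borel_measurable_integrable[OF f] by simp
  define P where "P h = (\<lambda>t. ennreal (max 0 (h t)))" for h :: "real \<Rightarrow> real"
  have pos_part_integrable: "integrable lborel (\<lambda>t. indicator {y<..} t * max 0 (h t))"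
    if "integrable lborel h" for h :: "real \<Rightarrow> real" and y
    using integrable_mult_indicator[of "{y<..}" lborel "\<lambda>t. max 0 (h t)"] that by auto
  have emeasure_P: "emeasure (density lborel (P h)) {y<..} = ennreal (LBINT t. indicator {y<..} t * max 0 (h t))"
    if h: "integrable lborel h" for h y
  proof -
    have [measurable]: "h \<in> borel_measurable borel" using borel_measurable_integrable[OF h] by simp
    have "emeasure (density lborel (P h)) {y<..} = (\<integral>\<^sup>+ t. ennreal (indicator {y<..} t * max 0 (h t)) \<partial>lborel)"
      unfolding P_def by (subst emeasure_density) (auto intro!: nn_integral_cong simp: indicator_def)
    also have "\<dots> = ennreal (LBINT t. indicator {y<..} t * max 0 (h t))"
      by (rule nn_integral_eq_integral[OF pos_part_integrable[OF h]]) auto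
    finally show ?thesis .
  qed
  have "(LBINT t. indicator {y<..} t * max 0 (f t)) - (LBINT t. indicator {y<..} t * max 0 (- f t))
      = (LINT t:{y<..}|lborel. f t)" for y
  proof -
    have "(LBINT t. indicator {y<..} t * max 0 (f t)) - (LBINT t. indicator {y<..} t * max 0 (- f t))
        = (LBINT t. indicator {y<..} t * max 0 (f t) - indicator {y<..} t * max 0 (- f t))"
      using f by (intro Bochner_Integration.integral_diff[symmetric] pos_part_integrable) auto
    also have "\<dots> = (LINT t:{y<..}|lborel. f t)"
      unfolding set_lebesgue_integral_def
      by (intro Bochner_Integration.integral_cong) (auto simp: indicator_def)
    finally show ?thesis .
  qed
  then have "(LBINT t. indicator {y<..} t * max 0 (f t)) = (LBINT t. indicator {y<..} t * max 0 (- f t))" for y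
    using tails by simp
  then have "density lborel (P f) = density lborel (P (\<lambda>t. - f t))"
    using f by (intro measure_eqI_lessThan) (auto simp: emeasure_P)
  then have "AE t in lborel. P f t = P (\<lambda>t. - f t) t"
    by (intro sigma_finite_measure.density_unique[OF lborel.sigma_finite_measure_axioms]) (auto simp: P_def)
  then show ?thesis
    by eventually_elim (auto simp: P_def max_def split: if_splits)
qed

lemma AE_zero_on_Ioo_if_orthogonal:
  fixes f :: "real \<Rightarrow> complex"
  assumes f[measurable]: "f \<in> borel_measurable borel"
    and loc: "\<And>c d. 0 < c \<Longrightarrow> set_integrable lborel {c..d} f"
    and orth: "orthogonal_Cc_half_line f" and "0 < e"
  shows "AE t in lborel. e < t \<and> t < R \<longrightarrow> f t = 0"
proof -
  define h where "h t = indicator {e<..<R} t *\<^sub>R f t" for t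
  have "set_integrable lborel {e<..<R} f"
    by (rule set_integrable_subset[OF loc[OF \<open>0 < e\<close>, of R]]) auto
  then have h: "integrable lborel h" unfolding h_def set_integrable_def .
  have tails: "(LINT t:{y<..}|lborel. h t) = 0" for y
  proof -
    have "(LINT t:{y<..}|lborel. h t) = (LINT t:{max y e<..<R}|lborel. f t)"
      unfolding set_lebesgue_integral_def h_def
      by (intro Bochner_Integration.integral_cong) (simp_all split: split_indicator)
    also have "\<dots> = 0"
    proof (cases "max y e < R")
      case True
      then show ?thesis
        by (intro set_integral_Ioo_eq_0_if_orthogonal[OF f _ orth]) (use loc \<open>0 < e\<close> in auto)
    next
      case False
      then have "{max y e<..<R} = {}" by auto
      then show ?thesis by (simp add: set_lebesgue_integral_def)
    qed
    finally show ?thesis .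
  qed
  have "(LINT t:{y<..}|lborel. Re (h t)) = 0" "(LINT t:{y<..}|lborel. Im (h t)) = 0" for y
  proof -
    have hy: "integrable lborel (\<lambda>t. indicator {y<..} t *\<^sub>R h t)"
      using integrable_mult_indicator[OF _ h] by auto
    show "(LINT t:{y<..}|lborel. Re (h t)) = 0" "(LINT t:{y<..}|lborel. Im (h t)) = 0"
      using integral_Re[OF hy] integral_Im[OF hy] tails[of y] unfolding set_lebesgue_integral_def by simp_all
  qed
  then have "AE t in lborel. Re (h t) = 0" "AE t in lborel. Im (h t) = 0"
    using h by (auto intro!: AE_zero_if_tail_integrals_zero)
  then show ?thesis
    by eventually_elim (auto simp: h_def complex_eq_iff indicator_def split: if_splits)
qed

lemma AE_zero_if_orthogonal_continuous:
  fixes f :: "real \<Rightarrow> complex"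
  assumes f: "f \<in> borel_measurable borel"
    and loc: "\<And>c d. 0 < c \<Longrightarrow> set_integrable lborel {c..d} f"
    and orth: "orthogonal_Cc_half_line f"
  shows "AE t in lborel. 0 < t \<longrightarrow> f t = 0"
proof -
  have "AE t in lborel. \<forall>n. inverse (real (Suc n)) < t \<and> t < real (Suc n) \<longrightarrow> f t = 0"
    unfolding AE_all_countable using AE_zero_on_Ioo_if_orthogonal[OF f loc orth] by auto
  then show ?thesis
  proof eventually_elim
    case (elim t)
    show ?case
    proof
      assume "0 < t"
      obtain n1 where n1: "inverse (real (Suc n1)) < t" using reals_Archimedean[OF \<open>0 < t\<close>] by blast
      obtain n2 where n2: "t < real n2" using reals_Archimedean2 by blast
      define n where "n = max n1 n2"
      have "inverse (real (Suc n)) \<le> inverse (real (Suc n1))"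
        unfolding n_def by (intro le_imp_inverse_le) auto
      moreover have "real n2 \<le> real n" unfolding n_def by simp
      ultimately have "inverse (real (Suc n)) < t \<and> t < real (Suc n)"
        using n1 n2 unfolding of_nat_Suc by linarith
      then show "f t = 0" using elim by blast
    qed
  qed
qed

lemma continuous_bump_integral_1:
  obtains h :: "real \<Rightarrow> real"
  where "continuous_on UNIV h" "\<And>x. x \<notin> {1..2} \<Longrightarrow> h x = 0" "(LBINT t. h t) = 1"
proof -
  define p where "p t = max 0 ((t - 1) * (2 - t))" for t :: real
  have cont: "continuous_on UNIV p" unfolding p_def by (intro continuous_intros)
  have supp: "p x = 0" if "x \<notin> {1..2}" for x
  proof (cases "x < 1")
    case True
    then have "(x - 1) * (2 - x) < 0" by (intro mult_neg_pos) auto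
    then show ?thesis unfolding p_def by simp
  next
    case False
    then have "(x - 1) * (2 - x) < 0" using that by (intro mult_pos_neg) auto
    then show ?thesis unfolding p_def by simp
  qed
  have nonneg: "p x \<ge> 0" for x unfolding p_def by simp
  have "integral {1..2} p \<ge> 0"
    by (rule integral_nonneg) (auto intro: nonneg integrable_continuous_real continuous_on_subset[OF cont])
  moreover have "integral {1..2} p \<noteq> 0"
  proof
    assume "integral {1..2} p = 0"
    then have "\<forall>x\<in>{1..2}. p x = 0"
      using integral_eq_0_iff[OF continuous_on_subset[OF cont subset_UNIV], of 1 2] nonneg by simp
    then have "p (3/2) = 0" by (rule bspec) simp
    then show False unfolding p_def by simp
  qed
  ultimately have I: "integral {1..2} p > 0" by simp
  show ?thesis
  proof (rule that[of "\<lambda>t. p t / integral {1..2} p"])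
    show "continuous_on UNIV (\<lambda>t. p t / integral {1..2} p)" using cont I by (intro continuous_intros) auto
    show "p x / integral {1..2} p = 0" if "x \<notin> {1..2}" for x using supp[OF that] by simp
    show "(LBINT t. p t / integral {1..2} p) = 1"
      using integrable_continuous_supported_Icc(2)[OF cont supp] I by simp
  qed
qed

(* du Bois-Reymond: with C = int w h for a fixed bump h of integral 1, w - C is orthogonal to every
   compactly supported continuous g, because g - (int g) h has a compactly supported antiderivative. *)
lemma weak_deriv_zero_imp_AE_const:
  fixes w :: "real \<Rightarrow> complex"
  assumes w[measurable]: "w \<in> borel_measurable borel"
    and loc: "\<And>c d. 0 < c \<Longrightarrow> set_integrable lborel {c..d} w"
    and orth: "\<And>\<phi>. test_on {0<..} \<phi> \<Longrightarrow> (LBINT t. w t * complex_of_real (deriv \<phi> t)) = 0"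
  obtains C where "AE t in lborel. 0 < t \<longrightarrow> w t = C"
proof -
  obtain h :: "real \<Rightarrow> real"
    where h: "continuous_on UNIV h" "\<And>x. x \<notin> {1..2} \<Longrightarrow> h x = 0" "(LBINT t. h t) = 1"
    using continuous_bump_integral_1 by blast
  define C where "C = (LBINT t. w t * complex_of_real (h t))"
  have "orthogonal_Cc_half_line (\<lambda>t. w t - C)"
  proof (rule orthogonal_Cc_half_lineI)
    fix g :: "real \<Rightarrow> real" and c d :: real
    assume g: "continuous_on UNIV g" "0 < c" "c \<le> d" "\<And>x. x \<notin> {c..d} \<Longrightarrow> g x = 0"
    define a where "a = (LBINT t. g t)"
    define g' where "g' t = g t - a * h t" for t
    have g_int: "integrable lborel g" by (rule integrable_continuous_supported_Icc(1)[OF g(1,4)])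
    have g'_cont: "continuous_on UNIV g'" unfolding g'_def using g(1) h(1) by (intro continuous_intros)
    have g'_supp: "g' x = 0" if "x \<notin> {min c 1..max d 2}" for x
    proof -
      have "x \<notin> {c..d}" "x \<notin> {1..2}" using that by auto
      then show ?thesis unfolding g'_def using g(4) h(2) by simp
    qed
    have h_int: "integrable lborel h" by (rule integrable_continuous_supported_Icc(1)[OF h(1,2)])
    have "integral {min c 1..max d 2} g' = (LBINT t. g' t)"
      by (rule integrable_continuous_supported_Icc(2)[OF g'_cont g'_supp, symmetric])
    also have "\<dots> = 0" unfolding g'_def a_def using g_int h_int h(3) by simp
    finally have "integral {min c 1..max d 2} g' = 0" .
    moreover have "min c 1 \<le> max d 2" "{min c 1..max d 2} \<subseteq> {0<..}" using g(2) by auto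
    ultimately obtain \<phi> where \<phi>: "test_on {0<..} \<phi>" "\<And>x. deriv \<phi> x = g' x"
      using test_on_antiderivative[OF g'_cont _ _ g'_supp] by blast
    have "(LBINT t. w t * complex_of_real (g' t)) = 0" using orth[OF \<phi>(1)] unfolding \<phi>(2) .
    moreover have wg: "integrable lborel (\<lambda>t. w t * complex_of_real (g t))"
      by (rule integrable_mult_continuous_supported_Icc(1)[OF w loc[OF g(2)] g(1,4)])
    moreover have wh: "integrable lborel (\<lambda>t. w t * complex_of_real (h t))"
      by (rule integrable_mult_continuous_supported_Icc(1)[OF w loc[OF zero_less_one] h(1,2)])
    ultimately have "(LBINT t. w t * complex_of_real (g t)) = complex_of_real a * C"
      unfolding g'_def C_def by (simp add: algebra_simps)
    moreover have "integrable lborel (\<lambda>t. C * complex_of_real (g t))"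
      using g_int by (intro integrable_mult_right integrable_of_real)
    ultimately show "(LBINT t. (w t - C) * complex_of_real (g t)) = 0"
      using wg unfolding a_def by (simp add: algebra_simps)
  qed
  moreover have "set_integrable lborel {c..d} (\<lambda>t. w t - C)" if "0 < c" for c d
    using loc[OF that] by (intro set_integral_diff(1)) (auto simp: set_integrable_def emeasure_lborel_Icc_eq)
  ultimately have "AE t in lborel. 0 < t \<longrightarrow> w t - C = 0"
    by (intro AE_zero_if_orthogonal_continuous) auto
  then show ?thesis by (intro that[of C]) auto
qed

lemma weak_deriv_indefinite_integral:
  fixes v :: "real \<Rightarrow> complex"
  assumes v[measurable]: "v \<in> borel_measurable borel" and loc: "\<And>d. set_integrable lborel {0..d} v"
    and \<phi>: "test_on {0<..} \<phi>"
  shows "(LBINT t. (LINT s:{0..t}|lborel. v s) * complex_of_real (deriv \<phi> t))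
    = - (LBINT t. v t * complex_of_real (\<phi> t))"
proof -
  obtain c d where cd: "c \<le> d" "{c..d} \<subseteq> {0<..}" "\<And>x. x \<notin> {c..d} \<Longrightarrow> \<phi> x = 0"
    "\<And>x. x \<notin> {c..d} \<Longrightarrow> deriv \<phi> x = 0" using test_on_support_Icc[OF \<phi>] by auto
  define U where "U x = (LINT s:{0..x}|lborel. v s)" for x
  have U_meas: "U \<in> borel_measurable borel"
    unfolding U_def by (rule borel_measurable_indefinite_integral[OF v])
  have U_int: "set_integrable lborel {0..d+1} U"
    unfolding U_def by (intro borel_integrable_atLeastAtMost' continuous_on_indefinite_integral loc)
  have supp: "\<phi> x = 0" "deriv \<phi> x = 0" if "x \<notin> {0..d+1}" for x
    using that cd by auto
  have "0 < d" using cd(1,2) by auto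
  have "(LBINT t. U t * complex_of_real (deriv \<phi> t)) = (LINT t:{0..d+1}|lborel. complex_of_real (deriv \<phi> t) * U t)"
    using integrable_mult_continuous_supported_Icc(2)[OF U_meas U_int test_on_continuous_deriv[OF \<phi>] supp(2)]
    by (simp add: U_def mult.commute)
  also have "\<dots> = - (LINT t:{0..d+1}|lborel. v t * complex_of_real (\<phi> t))"
    using integration_by_parts_indefinite_integral[OF v loc test_on_has_derivative[OF \<phi>] test_on_continuous_deriv[OF \<phi>], of "d+1"]
      \<open>0 < d\<close> cd(3)[of "d+1"] unfolding U_def by simp
  also have "\<dots> = - (LBINT t. v t * complex_of_real (\<phi> t))"
    using integrable_mult_continuous_supported_Icc(2)[OF v loc test_on_continuous[OF \<phi>] supp(1)] by simp
  finally show ?thesis unfolding U_def .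
qed

lemma weak_deriv_on_half_line_representation:
  fixes u v :: "real \<Rightarrow> complex"
  assumes u[measurable]: "u \<in> borel_measurable borel" and v[measurable]: "v \<in> borel_measurable borel"
    and u_loc: "\<And>d. set_integrable lborel {0..d} u" and v_loc: "\<And>d. set_integrable lborel {0..d} v"
    and weak: "weak_deriv_on {0<..} u v"
  obtains C where "AE t in lborel. 0 < t \<longrightarrow> u t = C + (LINT s:{0..t}|lborel. v s)"
proof -
  define U where "U x = (LINT s:{0..x}|lborel. v s)" for x
  have U_meas: "U \<in> borel_measurable borel"
    unfolding U_def by (rule borel_measurable_indefinite_integral[OF v])
  have U_loc: "set_integrable lborel {c..d} U" if "0 \<le> c" for c d
    using continuous_on_indefinite_integral[OF v_loc[of d]] that unfolding U_def
    by (intro borel_integrable_atLeastAtMost') (auto elim: continuous_on_subset)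
  have u_loc': "set_integrable lborel {c..d} u" if "0 \<le> c" for c d
    by (rule set_integrable_subset[OF u_loc[of d]]) (use that in auto)
  obtain C where "AE t in lborel. 0 < t \<longrightarrow> u t - U t = C"
  proof (rule weak_deriv_zero_imp_AE_const)
    show "(\<lambda>t. u t - U t) \<in> borel_measurable borel" using U_meas by measurable
    show "set_integrable lborel {c..d} (\<lambda>t. u t - U t)" if "0 < c" for c d
      using u_loc' U_loc that by (intro set_integral_diff(1)) auto
    show "(LBINT t. (u t - U t) * complex_of_real (deriv \<phi> t)) = 0" if \<phi>: "test_on {0<..} \<phi>" for \<phi>
    proof -
      obtain c d where cd: "c \<le> d" "{c..d} \<subseteq> {0<..}" "\<And>x. x \<notin> {c..d} \<Longrightarrow> \<phi> x = 0"
        "\<And>x. x \<notin> {c..d} \<Longrightarrow> deriv \<phi> x = 0" using test_on_support_Icc[OF \<phi>] by auto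
      have "0 < c" using cd(1,2) by auto
      then have vanish: "\<phi> t = 0" "deriv \<phi> t = 0" if "t \<notin> {0<..}" for t
        using that cd(3,4) by auto
      have "(LBINT t. u t * complex_of_real (deriv \<phi> t)) = (LINT t:{0<..}|lborel. u t * complex_of_real (deriv \<phi> t))"
        by (rule set_integral_eq_integral_if_vanishes[symmetric]) (simp add: vanish)
      also have "\<dots> = - (LINT t:{0<..}|lborel. v t * complex_of_real (\<phi> t))"
        using weak \<phi> unfolding weak_deriv_on_def by blast
      also have "\<dots> = - (LBINT t. v t * complex_of_real (\<phi> t))"
        by (subst set_integral_eq_integral_if_vanishes) (simp_all add: vanish)
      also have "\<dots> = (LBINT t. U t * complex_of_real (deriv \<phi> t))"
        unfolding U_def by (rule weak_deriv_indefinite_integral[OF v v_loc \<phi>, symmetric])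
      moreover have "integrable lborel (\<lambda>t. u t * complex_of_real (deriv \<phi> t))"
        using u_loc' \<open>0 < c\<close> test_on_continuous_deriv[OF \<phi>] cd(4)
        by (intro integrable_mult_continuous_supported_Icc(1)[of u c d "deriv \<phi>"]) simp_all
      moreover have "integrable lborel (\<lambda>t. U t * complex_of_real (deriv \<phi> t))"
        using U_meas U_loc \<open>0 < c\<close> test_on_continuous_deriv[OF \<phi>] cd(4)
        by (intro integrable_mult_continuous_supported_Icc(1)[of U c d "deriv \<phi>"]) simp_all
      ultimately show ?thesis by (simp add: left_diff_distrib)
    qed
  qed
  then show ?thesis by (intro that[of C]) (auto simp: U_def algebra_simps)
qed

lemma L2_on_indicator_Icc_mult_continuous:
  fixes h :: "real \<Rightarrow> real"
  assumes h: "continuous_on UNIV h" and I: "I \<in> sets borel"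
  shows "L2_on I (\<lambda>t. complex_of_real (indicator {c..d} t * h t))"
proof -
  have [measurable]: "h \<in> borel_measurable borel" using h by (rule borel_measurable_continuous_onI)
  have "set_integrable lborel {c..d} (\<lambda>t. (h t)\<^sup>2)"
    using h by (intro borel_integrable_atLeastAtMost' continuous_intros) (auto elim: continuous_on_subset)
  then have "integrable lborel (\<lambda>t. indicator {c..d} t *\<^sub>R (h t)\<^sup>2)"
    unfolding set_integrable_def .
  then have "integrable lborel (\<lambda>t. indicator I t *\<^sub>R (indicator {c..d} t *\<^sub>R (h t)\<^sup>2))"
    by (rule integrable_mult_indicator[rotated]) (simp add: I)
  moreover have "(\<lambda>t. indicator I t *\<^sub>R (cmod (complex_of_real (indicator {c..d} t * h t)))\<^sup>2)
      = (\<lambda>t. indicator I t *\<^sub>R (indicator {c..d} t *\<^sub>R (h t)\<^sup>2))"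
    by (auto simp: indicator_def)
  ultimately show ?thesis
    using I unfolding L2_on_def set_borel_measurable_def set_integrable_def by simp
qed

lemma weak_deriv_on_indicator_Icc_mult:
  fixes p p' :: "real \<Rightarrow> real"
  assumes D: "\<And>x. (p has_real_derivative p' x) (at x)" and cont: "continuous_on UNIV p'"
    and "p c = 0" "p d = 0" "c \<le> d" "{c..d} \<subseteq> I"
  shows "weak_deriv_on I (\<lambda>t. complex_of_real (indicator {c..d} t * p t))
    (\<lambda>t. complex_of_real (indicator {c..d} t * p' t))"
  unfolding weak_deriv_on_def
proof (intro allI impI)
  fix \<phi> assume \<phi>: "test_on I \<phi>"
  have "(LBINT x. (p x * deriv \<phi> x) * indicator {c..d} x)
      = p d * \<phi> d - p c * \<phi> c - (LBINT x. (p' x * \<phi> x) * indicator {c..d} x)"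
    using cont test_on_continuous_deriv[OF \<phi>] D test_on_has_derivative[OF \<phi>] \<open>c \<le> d\<close>
    by (intro integral_by_parts) (auto simp: continuous_on_eq_continuous_at)
  moreover have "(LINT x:I|lborel. complex_of_real (indicator {c..d} x * q x) * complex_of_real (f x))
      = complex_of_real (LBINT x. (q x * f x) * indicator {c..d} x)" for q f
    unfolding set_lebesgue_integral_def integral_complex_of_real[symmetric]
    using \<open>{c..d} \<subseteq> I\<close> by (intro Bochner_Integration.integral_cong) (auto simp: indicator_def)
  ultimately show "(LINT x:I|lborel. complex_of_real (indicator {c..d} x * p x) * complex_of_real (deriv \<phi> x))
      = - (LINT x:I|lborel. complex_of_real (indicator {c..d} x * p' x) * complex_of_real (\<phi> x))"
    using \<open>p c = 0\<close> \<open>p d = 0\<close> by simp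
qed

section \<open>Gluing two rescaled copies of a half-line state\<close>

definition zero_extension :: "(real \<Rightarrow> complex) \<Rightarrow> real \<Rightarrow> complex" where
  "zero_extension u t = indicator {0<..} t *\<^sub>R u t"

locale half_line_B1 =
  fixes u v :: "real \<Rightarrow> complex"
  assumes measurable_u [measurable]: "u \<in> borel_measurable borel"
    and measurable_v [measurable]: "v \<in> borel_measurable borel"
    and square_integrable_u: "integrable lborel (\<lambda>t. (cmod (u t))\<^sup>2)"
    and square_integrable_v: "integrable lborel (\<lambda>t. (cmod (v t))\<^sup>2)"
    and square_integrable_tu: "integrable lborel (\<lambda>t. t\<^sup>2 * (cmod (u t))\<^sup>2)"
    and u_nonpos: "\<And>t. t \<le> 0 \<Longrightarrow> u t = 0"
    and v_nonpos: "\<And>t. t \<le> 0 \<Longrightarrow> v t = 0"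
    and weak_deriv: "weak_deriv_on {0<..} u v"

lemma B1_pair_half_line_zero_extension:
  assumes "B1_pair {0<..} u v"
  shows "half_line_B1 (zero_extension u) (zero_extension v)"
proof
  have Lu: "L2_on {0<..} u" and Lv: "L2_on {0<..} v" and W: "weak_deriv_on {0<..} u v"
    and Lt: "L2_on {0<..} (\<lambda>t. complex_of_real t * u t)"
    using assms unfolding B1_pair_def by auto
  have norm_sq: "(\<lambda>t. (cmod (zero_extension w t))\<^sup>2) = (\<lambda>t. indicator {0<..} t *\<^sub>R (cmod (w t))\<^sup>2)" for w
    by (auto simp: zero_extension_def indicator_def)
  show "zero_extension u \<in> borel_measurable borel" "zero_extension v \<in> borel_measurable borel"
    using Lu Lv unfolding L2_on_def set_borel_measurable_def zero_extension_def by simp_all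
  show "integrable lborel (\<lambda>t. (cmod (zero_extension u t))\<^sup>2)"
    "integrable lborel (\<lambda>t. (cmod (zero_extension v t))\<^sup>2)"
    using Lu Lv unfolding L2_on_def set_integrable_def norm_sq by simp_all
  have "(\<lambda>t. t\<^sup>2 * (cmod (zero_extension u t))\<^sup>2) = (\<lambda>t. indicator {0<..} t *\<^sub>R (cmod (complex_of_real t * u t))\<^sup>2)"
    by (auto simp: zero_extension_def indicator_def norm_mult power_mult_distrib)
  then show "integrable lborel (\<lambda>t. t\<^sup>2 * (cmod (zero_extension u t))\<^sup>2)"
    using Lt unfolding L2_on_def set_integrable_def by simp
  show "zero_extension u t = 0" "zero_extension v t = 0" if "t \<le> 0" for t
    using that by (simp_all add: zero_extension_def)
  have "(LINT x:{0<..}|lborel. zero_extension w x * f x) = (LINT x:{0<..}|lborel. w x * f x)" for w f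
    by (rule set_lebesgue_integral_cong) (auto simp: zero_extension_def)
  then show "weak_deriv_on {0<..} (zero_extension u) (zero_extension v)"
    using W unfolding weak_deriv_on_def by simp
qed

lemma set_integral_half_line_zero_extension:
  "(LINT t:{0<..}|lborel. (cmod (u t))\<^sup>2) = (LBINT t. (cmod (zero_extension u t))\<^sup>2)"
  "(LINT t:{0<..}|lborel. (cmod (v t))\<^sup>2 + (t + \<eta>)\<^sup>2 * (cmod (u t))\<^sup>2)
    = (LBINT t. (cmod (zero_extension v t))\<^sup>2 + (t + \<eta>)\<^sup>2 * (cmod (zero_extension u t))\<^sup>2)"
  unfolding set_lebesgue_integral_def
  by (auto intro!: Bochner_Integration.integral_cong simp: zero_extension_def indicator_def)

context half_line_B1
begin

lemma set_integrable_u: "set_integrable lborel {c..d} u"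
  and set_integrable_v: "set_integrable lborel {c..d} v"
  by (simp_all add: square_integrable_imp_set_integrable_Icc square_integrable_u square_integrable_v)

lemma representation:
  obtains C where "AE t in lborel. 0 < t \<longrightarrow> u t = C + (LINT s:{0..t}|lborel. v s)"
  using weak_deriv_on_half_line_representation[OF measurable_u measurable_v
      set_integrable_u set_integrable_v weak_deriv] by blast

(* Test functions only need to vanish at 0 itself: u = C + int_0^t v, and the boundary
   term C * psi 0 drops out. *)
lemma weak_deriv_vanishing_at_0:
  fixes \<psi> \<psi>' :: "real \<Rightarrow> real"
  assumes D: "\<And>x. (\<psi> has_real_derivative \<psi>' x) (at x)" and cont: "continuous_on UNIV \<psi>'"
    and "\<psi> 0 = 0" and R: "\<And>x. x > R \<Longrightarrow> \<psi> x = 0" "\<And>x. x > R \<Longrightarrow> \<psi>' x = 0"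
  shows "(LBINT x. u x * complex_of_real (\<psi>' x)) = - (LBINT x. v x * complex_of_real (\<psi> x))"
proof -
  obtain C where rep: "AE t in lborel. 0 < t \<longrightarrow> u t = C + (LINT s:{0..t}|lborel. v s)"
    using representation by blast
  define U where "U x = (LINT s:{0..x}|lborel. v s)" for x
  have [measurable]: "U \<in> borel_measurable borel"
    unfolding U_def by (rule borel_measurable_indefinite_integral[OF measurable_v])
  have [measurable]: "\<psi>' \<in> borel_measurable borel" using cont by (rule borel_measurable_continuous_onI)
  define S where "S = max 0 R + 1"
  have "0 \<le> S" "\<psi> S = 0" using R unfolding S_def by auto
  have cont_S: "continuous_on {0..S} \<psi>'" using cont continuous_on_subset by blast
  have cont_U: "continuous_on {0..S} U" unfolding U_def by (rule continuous_on_indefinite_integral[OF set_integrable_v])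
  have "(LBINT x. u x * complex_of_real (\<psi>' x)) = (LINT x:{0..S}|lborel. u x * complex_of_real (\<psi>' x))"
    by (rule set_integral_eq_integral_if_vanishes[symmetric]) (auto simp: u_nonpos R(2) S_def)
  also have "\<dots> = (LINT x:{0..S}|lborel. C * complex_of_real (\<psi>' x) + complex_of_real (\<psi>' x) * U x)"
  proof (rule set_lebesgue_integral_cong_AE)
    show "AE x\<in>{0..S} in lborel. u x * complex_of_real (\<psi>' x) = C * complex_of_real (\<psi>' x) + complex_of_real (\<psi>' x) * U x"
      using rep AE_lborel_singleton[of 0] by eventually_elim (auto simp: U_def algebra_simps)
  qed measurable
  also have "\<dots> = C * (LINT x:{0..S}|lborel. complex_of_real (\<psi>' x)) + (LINT x:{0..S}|lborel. complex_of_real (\<psi>' x) * U x)"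
    using cont_S cont_U
    by (simp add: set_integral_add borel_integrable_atLeastAtMost' continuous_intros)
  also have "(LINT x:{0..S}|lborel. complex_of_real (\<psi>' x)) = 0"
  proof -
    have "(LBINT x. \<psi>' x * indicator {0..S} x) = \<psi> S - \<psi> 0"
      by (rule integral_FTC_Icc_real) (use \<open>0 \<le> S\<close> D cont in \<open>auto simp: continuous_on_eq_continuous_at\<close>)
    then show ?thesis
      using \<open>\<psi> S = 0\<close> \<open>\<psi> 0 = 0\<close> by (simp add: set_integral_complex_of_real set_lebesgue_integral_def mult.commute)
  qed
  also have "(LINT x:{0..S}|lborel. complex_of_real (\<psi>' x) * U x) = - (LINT s:{0..S}|lborel. v s * complex_of_real (\<psi> s))"
    using integration_by_parts_indefinite_integral[OF measurable_v set_integrable_v D cont] \<open>\<psi> S = 0\<close>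
    unfolding U_def by simp
  also have "(LINT s:{0..S}|lborel. v s * complex_of_real (\<psi> s)) = (LBINT x. v x * complex_of_real (\<psi> x))"
    by (rule set_integral_eq_integral_if_vanishes) (auto simp: v_nonpos R(1) S_def)
  finally show ?thesis by simp
qed

lemma integrable_potential: "integrable lborel (\<lambda>t. (t + \<eta>)\<^sup>2 * (cmod (u t))\<^sup>2)"
  by (rule integrable_shifted_weight[OF measurable_u square_integrable_u square_integrable_tu])

(* Where the weight (s + eta)^2 may be small, u is controlled through its values on
   [m + 1, m + 2], where (s + eta)^2 >= 1. *)
lemma bound_below_well:
  assumes rep: "AE t in lborel. 0 < t \<longrightarrow> u t = C + (LINT s:{0..t}|lborel. v s)"
    and m: "0 \<le> m" "0 \<le> m + \<eta>" and t: "0 < t" "m - 1 \<le> t" "t \<le> m + 1"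
  shows "(cmod (C + (LINT s:{0..t}|lborel. v s)))\<^sup>2
    \<le> 2 * (LBINT s. (s + \<eta>)\<^sup>2 * (cmod (u s))\<^sup>2) + 6 * (LBINT s. (cmod (v s))\<^sup>2)"
proof -
  define b where "b = (cmod (C + (LINT s:{0..t}|lborel. v s)))\<^sup>2"
  define D where "D = (LBINT s. (cmod (v s))\<^sup>2)"
  define P where "P = (LBINT s. (s + \<eta>)\<^sup>2 * (cmod (u s))\<^sup>2)"
  have "0 \<le> D" unfolding D_def by (intro integral_nonneg_AE) auto
  have "AE s in lborel. s \<in> {m+1..m+2} \<longrightarrow> b \<le> 2 * ((s + \<eta>)\<^sup>2 * (cmod (u s))\<^sup>2) + 6 * D"
    using rep
  proof eventually_elim
    case (elim s)
    show ?case
    proof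
      assume s: "s \<in> {m+1..m+2}"
      have "b \<le> 2 * (cmod (u s))\<^sup>2 + 2 * ((s - t) * D)"
        using norm_sq_indefinite_integral_le[OF measurable_v square_integrable_v, of t s C] elim s t m
        unfolding b_def D_def by simp
      moreover have "(s - t) * D \<le> 3 * D" using s t \<open>0 \<le> D\<close> by (intro mult_right_mono) auto
      moreover have "1 \<le> (s + \<eta>)\<^sup>2" using s m by (intro one_le_power) auto
      then have "(cmod (u s))\<^sup>2 \<le> (s + \<eta>)\<^sup>2 * (cmod (u s))\<^sup>2" by (simp add: mult_le_cancel_right1)
      ultimately show "b \<le> 2 * ((s + \<eta>)\<^sup>2 * (cmod (u s))\<^sup>2) + 6 * D" by linarith
    qed
  qed
  moreover have pot_int: "set_integrable lborel {m+1..m+2} (\<lambda>s. (s + \<eta>)\<^sup>2 * (cmod (u s))\<^sup>2)"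
    unfolding set_integrable_def using integrable_mult_indicator[OF _ integrable_potential] by simp
  moreover have const_int: "set_integrable lborel {m+1..m+2} (\<lambda>s. c::real)" for c
    unfolding set_integrable_def by (intro integrable_scaleR_left integrable_real_indicator) auto
  ultimately have "(LINT s:{m+1..m+2}|lborel. b)
      \<le> (LINT s:{m+1..m+2}|lborel. 2 * ((s + \<eta>)\<^sup>2 * (cmod (u s))\<^sup>2) + 6 * D)"
    by (intro set_integral_mono_AE set_integral_add(1) set_integrable_mult_right) auto
  also have "\<dots> = 2 * (LINT s:{m+1..m+2}|lborel. (s + \<eta>)\<^sup>2 * (cmod (u s))\<^sup>2) + 6 * D"
    using pot_int const_int by (simp add: set_integral_add set_integral_const)
  also have "(LINT s:{m+1..m+2}|lborel. (s + \<eta>)\<^sup>2 * (cmod (u s))\<^sup>2) \<le> P"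
    unfolding P_def set_lebesgue_integral_def
    using pot_int integrable_potential unfolding set_integrable_def
    by (intro integral_mono) (auto simp: indicator_def)
  finally show ?thesis unfolding b_def D_def P_def by (simp add: set_integral_const)
qed

lemma norm_sq_le_energy:
  "(LBINT t. (cmod (u t))\<^sup>2) \<le> 12 * (LBINT t. (cmod (v t))\<^sup>2 + (t + \<eta>)\<^sup>2 * (cmod (u t))\<^sup>2)"
proof -
  obtain C where rep: "AE t in lborel. 0 < t \<longrightarrow> u t = C + (LINT s:{0..t}|lborel. v s)"
    using representation by blast
  define D where "D = (LBINT t. (cmod (v t))\<^sup>2)"
  define P where "P = (LBINT t. (t + \<eta>)\<^sup>2 * (cmod (u t))\<^sup>2)"
  define m where "m = max 0 (- \<eta>)"
  have "0 \<le> D" unfolding D_def by (intro integral_nonneg_AE) auto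
  have "0 \<le> P" unfolding P_def by (intro integral_nonneg_AE) auto
  have "AE t in lborel. (cmod (u t))\<^sup>2 \<le> indicator {m-1..m+1} t * (2 * P + 6 * D) + (t + \<eta>)\<^sup>2 * (cmod (u t))\<^sup>2"
    using rep
  proof eventually_elim
    case (elim t)
    consider "t \<le> 0" | "0 < t" "t \<in> {m-1..m+1}" | "0 < t" "t \<notin> {m-1..m+1}" by fastforce
    then show ?case
    proof cases
      case 1
      then show ?thesis using u_nonpos \<open>0 \<le> P\<close> \<open>0 \<le> D\<close> by (simp add: indicator_def)
    next
      case 2
      then have "(cmod (u t))\<^sup>2 \<le> 2 * P + 6 * D"
        using bound_below_well[where m=m and t=t and \<eta>=\<eta>, OF rep] elim
        unfolding P_def D_def m_def by auto
      then show ?thesis using 2 by (simp add: add_increasing2)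
    next
      case 3
      then have "1 \<le> \<bar>t + \<eta>\<bar>" unfolding m_def by (auto split: if_splits)
      then have "1 \<le> (t + \<eta>)\<^sup>2" by (metis abs_ge_self one_le_power order.trans power2_abs)
      then show ?thesis using 3 by (simp add: mult_le_cancel_right1)
    qed
  qed
  moreover have "integrable lborel (\<lambda>t. indicator {m-1..m+1} t * (2 * P + 6 * D))"
    by (intro integrable_mult_left integrable_real_indicator) auto
  ultimately have "(LBINT t. (cmod (u t))\<^sup>2)
      \<le> (LBINT t. indicator {m-1..m+1} t * (2 * P + 6 * D) + (t + \<eta>)\<^sup>2 * (cmod (u t))\<^sup>2)"
    using square_integrable_u integrable_potential by (intro integral_mono_AE) auto
  also have "\<dots> = 2 * (2 * P + 6 * D) + P"
    using integrable_potential \<open>integrable lborel (\<lambda>t. indicator {m-1..m+1} t * _)\<close>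
    unfolding P_def by (simp add: measure_lborel_Icc)
  also have "\<dots> \<le> 12 * (D + P)" using \<open>0 \<le> P\<close> by simp
  also have "D + P = (LBINT t. (cmod (v t))\<^sup>2 + (t + \<eta>)\<^sup>2 * (cmod (u t))\<^sup>2)"
    unfolding D_def P_def using square_integrable_v integrable_potential by simp
  finally show ?thesis .
qed

(* With r^4 = -a, the substitutions t / r for t > 0 and -r^3 t for t < 0 turn
   eta r + sigma a t * t into r (s + eta) on both halves (potential_glued), and the two halves
   match at 0 because both take the boundary value of u there (weak_deriv_vanishing_at_0). *)
definition glued :: "real \<Rightarrow> real \<Rightarrow> complex" where
  "glued r t = u (t / r) + u (- (r^3 * t))"

definition glued_deriv :: "real \<Rightarrow> real \<Rightarrow> complex" where
  "glued_deriv r t = v (t / r) / complex_of_real r - complex_of_real (r^3) * v (- (r^3 * t))"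

lemma glued_cases:
  assumes "0 < r"
  obtains "0 < t" "u (- (r^3 * t)) = 0" "v (- (r^3 * t)) = 0"
    | "t \<le> 0" "u (t / r) = 0" "v (t / r) = 0"
proof (cases "0 < t")
  case True
  then have "- (r^3 * t) \<le> 0" using assms by simp
  then show ?thesis using True that(1) u_nonpos v_nonpos by blast
next
  case False
  then have "t / r \<le> 0" using assms by (simp add: divide_nonpos_pos)
  then show ?thesis using False that(2) u_nonpos v_nonpos by simp
qed

lemma norm_glued:
  assumes "0 < r"
  shows "(cmod (glued r t))\<^sup>2 = (cmod (u (t / r)))\<^sup>2 + (cmod (u (- (r^3 * t))))\<^sup>2"
  by (cases rule: glued_cases[OF assms, of t]) (simp_all add: glued_def)

lemma norm_glued_deriv:
  assumes "0 < r"
  shows "(cmod (glued_deriv r t))\<^sup>2 = (cmod (v (t / r)))\<^sup>2 / r\<^sup>2 + r^6 * (cmod (v (- (r^3 * t))))\<^sup>2"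
  by (cases rule: glued_cases[OF assms, of t])
     (simp_all add: glued_deriv_def norm_mult norm_divide norm_power power_mult_distrib power_divide flip: power_mult)

lemma potential_glued:
  assumes "0 < r"
  shows "(\<eta> * r + sigma (- (r^4)) t * t)\<^sup>2 * (cmod (glued r t))\<^sup>2
    = r\<^sup>2 * ((t / r + \<eta>)\<^sup>2 * (cmod (u (t / r)))\<^sup>2) + r\<^sup>2 * ((- (r^3 * t) + \<eta>)\<^sup>2 * (cmod (u (- (r^3 * t))))\<^sup>2)"
proof (cases rule: glued_cases[OF assms, of t])
  case 1
  have "(\<eta> * r + t)\<^sup>2 = r\<^sup>2 * (t / r + \<eta>)\<^sup>2" using assms by (simp add: field_simps power2_eq_square)
  then show ?thesis using 1 by (simp add: glued_def sigma_def)
next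
  case 2
  have "(\<eta> * r + - (r^4) * t)\<^sup>2 = r\<^sup>2 * (- (r^3 * t) + \<eta>)\<^sup>2"
    by (simp add: power2_eq_square eval_nat_numeral algebra_simps)
  then show ?thesis using 2 by (simp add: glued_def sigma_def)
qed

lemma integral_norm_glued:
  assumes "0 < r"
  shows "integrable lborel (\<lambda>t. (cmod (glued r t))\<^sup>2)"
    and "(LBINT t. (cmod (glued r t))\<^sup>2) = (r + 1 / r^3) * (LBINT t. (cmod (u t))\<^sup>2)"
  using lborel_integral_glue_scalings[OF assms square_integrable_u]
  by (simp_all add: norm_glued[OF assms] algebra_simps)

lemma integrable_weight_glued:
  assumes "0 < r"
  shows "integrable lborel (\<lambda>t. (cmod (complex_of_real t * glued r t))\<^sup>2)"
proof -
  have "(cmod (complex_of_real t * glued r t))\<^sup>2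
      = r\<^sup>2 * ((t / r)\<^sup>2 * (cmod (u (t / r)))\<^sup>2) + (1 / r^6) * ((- (r^3 * t))\<^sup>2 * (cmod (u (- (r^3 * t))))\<^sup>2)" for t
  proof -
    have "(cmod (complex_of_real t * glued r t))\<^sup>2 = t\<^sup>2 * (cmod (u (t / r)))\<^sup>2 + t\<^sup>2 * (cmod (u (- (r^3 * t))))\<^sup>2"
      by (simp add: norm_mult power_mult_distrib norm_glued[OF assms] algebra_simps)
    also have "t\<^sup>2 * (cmod (u (t / r)))\<^sup>2 = r\<^sup>2 * ((t / r)\<^sup>2 * (cmod (u (t / r)))\<^sup>2)"
      using assms by (simp add: power_divide)
    also have "t\<^sup>2 * (cmod (u (- (r^3 * t))))\<^sup>2 = (1 / r^6) * ((- (r^3 * t))\<^sup>2 * (cmod (u (- (r^3 * t))))\<^sup>2)"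
      using assms by (simp add: power_mult_distrib flip: power_mult)
    finally show ?thesis .
  qed
  then show ?thesis
    using lborel_integral_glue_scalings[OF assms square_integrable_tu] by simp
qed

lemma integral_energy_glued:
  assumes "0 < r"
  shows "integrable lborel (\<lambda>t. (cmod (glued_deriv r t))\<^sup>2)"
    and "(LBINT t. (cmod (glued_deriv r t))\<^sup>2 + (\<eta> * r + sigma (- (r^4)) t * t)\<^sup>2 * (cmod (glued r t))\<^sup>2)
      = (1 / r + r^3) * (LBINT t. (cmod (v t))\<^sup>2 + (t + \<eta>)\<^sup>2 * (cmod (u t))\<^sup>2)"
proof -
  note scale_v = lborel_integral_glue_scalings[OF assms square_integrable_v]
  note scale_p = lborel_integral_glue_scalings[OF assms integrable_potential[of \<eta>]]
  show "integrable lborel (\<lambda>t. (cmod (glued_deriv r t))\<^sup>2)"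
    using scale_v by (simp add: norm_glued_deriv[OF assms])
  define D where "D = (LBINT t. (cmod (v t))\<^sup>2)"
  define P where "P = (LBINT t. (t + \<eta>)\<^sup>2 * (cmod (u t))\<^sup>2)"
  have "(LBINT t. (cmod (glued_deriv r t))\<^sup>2 + (\<eta> * r + sigma (- (r^4)) t * t)\<^sup>2 * (cmod (glued r t))\<^sup>2)
      = (LBINT t. (cmod (v (t / r)))\<^sup>2 / r\<^sup>2 + r^6 * (cmod (v (- (r^3 * t))))\<^sup>2
          + r\<^sup>2 * ((t / r + \<eta>)\<^sup>2 * (cmod (u (t / r)))\<^sup>2)
          + r\<^sup>2 * ((- (r^3 * t) + \<eta>)\<^sup>2 * (cmod (u (- (r^3 * t))))\<^sup>2))"
    by (simp add: norm_glued_deriv[OF assms] potential_glued[OF assms] add.assoc)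
  also have "\<dots> = r * D / r\<^sup>2 + r^6 * D / r^3 + r\<^sup>2 * (r * P) + r\<^sup>2 * (P / r^3)"
    using scale_v scale_p unfolding D_def P_def by simp
  also have "\<dots> = (1 / r + r^3) * (D + P)"
    using assms by (simp add: field_simps eval_nat_numeral)
  also have "D + P = (LBINT t. (cmod (v t))\<^sup>2 + (t + \<eta>)\<^sup>2 * (cmod (u t))\<^sup>2)"
    unfolding D_def P_def using square_integrable_v integrable_potential by simp
  finally show "(LBINT t. (cmod (glued_deriv r t))\<^sup>2 + (\<eta> * r + sigma (- (r^4)) t * t)\<^sup>2 * (cmod (glued r t))\<^sup>2)
      = (1 / r + r^3) * (LBINT t. (cmod (v t))\<^sup>2 + (t + \<eta>)\<^sup>2 * (cmod (u t))\<^sup>2)" .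
qed

lemma weak_deriv_glued:
  assumes r: "0 < r"
  shows "weak_deriv_on UNIV (glued r) (glued_deriv r)"
  unfolding weak_deriv_on_def
proof (intro allI impI)
  fix \<phi> assume \<phi>: "test_on UNIV \<phi>"
  obtain a b where ab: "\<And>x. x \<notin> {a..b} \<Longrightarrow> \<phi> x = 0" "\<And>x. x \<notin> {a..b} \<Longrightarrow> deriv \<phi> x = 0"
    by (metis test_on_support_Icc[OF \<phi> is_interval_univ UNIV_not_empty])
  note D = test_on_has_derivative[OF \<phi>] and cont = test_on_continuous[OF \<phi>] test_on_continuous_deriv[OF \<phi>]
  note subst_\<phi> = integral_glue_substitution[where a=a and b=b and h=\<phi>, OF r _ _ cont(1) ab(1)]
    and subst_deriv = integral_glue_substitution[where a=a and b=b and h="deriv \<phi>", OF r _ _ cont(2) ab(2)]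
  define \<psi> where "\<psi> y = \<phi> (r * y) - \<phi> (- (y / r^3))" for y
  define \<psi>' where "\<psi>' y = r * deriv \<phi> (r * y) + deriv \<phi> (- (y / r^3)) / r^3" for y
  have "(\<psi> has_real_derivative \<psi>' y) (at y)" for y
    unfolding \<psi>_def \<psi>'_def using r
    by (auto intro!: derivative_eq_intros DERIV_chain2[OF D] simp: field_simps)
  moreover have "continuous_on UNIV \<psi>'"
    unfolding \<psi>'_def using r by (auto intro!: continuous_intros continuous_on_compose2[OF cont(2)])
  moreover have "\<psi> y = 0" "\<psi>' y = 0" if "max (b / r) (- (r^3 * a)) < y" for y
    using that r ab unfolding \<psi>_def \<psi>'_def by (auto simp: field_simps)
  ultimately have weak: "(LBINT y. u y * complex_of_real (\<psi>' y)) = - (LBINT y. v y * complex_of_real (\<psi> y))"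
    by (intro weak_deriv_vanishing_at_0[of \<psi> \<psi>' "max (b / r) (- (r^3 * a))"]) (auto simp: \<psi>_def)
  have "(LINT x:UNIV|lborel. glued r x * complex_of_real (deriv \<phi> x))
      = r * (LBINT y. u y * complex_of_real (deriv \<phi> (r * y)))
        + (1 / r^3) * (LBINT y. u y * complex_of_real (deriv \<phi> (- (y / r^3))))"
    using subst_deriv[OF measurable_u set_integrable_u]
    by (simp add: set_lebesgue_integral_def glued_def distrib_right)
  also have "\<dots> = (LBINT y. u y * complex_of_real (\<psi>' y))"
    using subst_deriv(1,2)[OF measurable_u set_integrable_u] unfolding \<psi>'_def
    by (simp add: distrib_left algebra_simps)
  also have "\<dots> = - ((LBINT y. v y * complex_of_real (\<phi> (r * y))) - (LBINT y. v y * complex_of_real (\<phi> (- (y / r^3)))))"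
    using weak subst_\<phi>[OF measurable_v set_integrable_v] unfolding \<psi>_def
    by (simp add: right_diff_distrib)
  also have "(LBINT y. v y * complex_of_real (\<phi> (r * y))) - (LBINT y. v y * complex_of_real (\<phi> (- (y / r^3))))
      = (LINT x:UNIV|lborel. glued_deriv r x * complex_of_real (\<phi> x))"
  proof -
    note subst_v = subst_\<phi>[OF measurable_v set_integrable_v]
    have "glued_deriv r x * complex_of_real (\<phi> x) = v (x / r) * complex_of_real (\<phi> x) / complex_of_real r
        - complex_of_real (r^3) * (v (- (r^3 * x)) * complex_of_real (\<phi> x))" for x
      by (simp add: glued_deriv_def algebra_simps)
    then have "(LINT x:UNIV|lborel. glued_deriv r x * complex_of_real (\<phi> x))
        = (LBINT x. v (x / r) * complex_of_real (\<phi> x)) / complex_of_real r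
          - complex_of_real (r^3) * (LBINT x. v (- (r^3 * x)) * complex_of_real (\<phi> x))"
      using subst_v(3,5) by (simp add: set_lebesgue_integral_def)
    also have "\<dots> = (LBINT y. v y * complex_of_real (\<phi> (r * y))) - (LBINT y. v y * complex_of_real (\<phi> (- (y / r^3))))"
      using subst_v(4,6) r by simp
    finally show ?thesis ..
  qed
  finally show "(LINT x:UNIV|lborel. glued r x * complex_of_real (deriv \<phi> x))
      = - (LINT x:UNIV|lborel. glued_deriv r x * complex_of_real (\<phi> x))" .
qed

lemma B1_pair_glued:
  assumes "0 < r"
  shows "B1_pair UNIV (glued r) (glued_deriv r)"
proof -
  have [measurable]: "glued r \<in> borel_measurable borel" "glued_deriv r \<in> borel_measurable borel"
    unfolding glued_def[abs_def] glued_deriv_def[abs_def] by measurable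
  show ?thesis
    unfolding B1_pair_def L2_on_def set_borel_measurable_def set_integrable_def
    using integral_norm_glued(1)[OF assms] integral_energy_glued(1)[OF assms]
      integrable_weight_glued[OF assms] weak_deriv_glued[OF assms]
    by simp
qed

end

section \<open>Rayleigh quotients\<close>

lemma exists_B1_pair_half_line:
  obtains u v where "B1_pair {0<..} u v" "(LINT t:{0<..}|lborel. (cmod (u t))\<^sup>2) \<noteq> 0"
proof -
  define p :: "real \<Rightarrow> real" where "p t = (t - 1)\<^sup>2 * (2 - t)\<^sup>2" for t
  define p' :: "real \<Rightarrow> real" where "p' t = 2 * (t - 1) * (2 - t)\<^sup>2 - 2 * (t - 1)\<^sup>2 * (2 - t)" for t
  have D: "(p has_real_derivative p' x) (at x)" for x
    unfolding p_def p'_def by (auto intro!: derivative_eq_intros simp: algebra_simps)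
  have cont: "continuous_on UNIV p" "continuous_on UNIV p'"
    unfolding p_def p'_def by (intro continuous_intros)+
  define u where "u t = complex_of_real (indicator {1..2} t * p t)" for t
  define v where "v t = complex_of_real (indicator {1..2} t * p' t)" for t
  have "(\<lambda>t. complex_of_real t * u t) = (\<lambda>t. complex_of_real (indicator {1..2} t * (t * p t)))"
    unfolding u_def by (auto simp: fun_eq_iff indicator_def)
  moreover have "L2_on {0<..} (\<lambda>t. complex_of_real (indicator {1..2} t * (t * p t)))"
    using cont by (intro L2_on_indicator_Icc_mult_continuous continuous_intros) auto
  moreover have "L2_on {0<..} u" unfolding u_def by (intro L2_on_indicator_Icc_mult_continuous cont) auto
  moreover have "L2_on {0<..} v" unfolding v_def by (intro L2_on_indicator_Icc_mult_continuous cont) auto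
  moreover have "weak_deriv_on {0<..} u v"
    unfolding u_def v_def by (intro weak_deriv_on_indicator_Icc_mult[OF D cont(2)]) (auto simp: p_def)
  ultimately have "B1_pair {0<..} u v" unfolding B1_pair_def by simp
  moreover have "(LINT t:{0<..}|lborel. (cmod (u t))\<^sup>2) \<noteq> 0"
  proof -
    have cont_sq: "continuous_on {1..2} (\<lambda>t. (p t)\<^sup>2)"
      using cont(1) by (intro continuous_intros) (auto elim: continuous_on_subset)
    have "(LINT t:{0<..}|lborel. (cmod (u t))\<^sup>2) = (LINT t:{1..2}|lborel. (p t)\<^sup>2)"
      unfolding set_lebesgue_integral_def u_def
      by (intro Bochner_Integration.integral_cong) (auto simp: indicator_def)
    also have "\<dots> = integral {1..2} (\<lambda>t. (p t)\<^sup>2)"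
      using cont_sq by (intro set_borel_integral_eq_integral(2) borel_integrable_atLeastAtMost')
    also have "\<dots> \<noteq> 0"
    proof
      assume "integral {1..2} (\<lambda>t. (p t)\<^sup>2) = 0"
      then have "(p (3/2))\<^sup>2 = 0" using integral_eq_0_iff[OF cont_sq] by simp
      then show False unfolding p_def by simp
    qed
    finally show ?thesis .
  qed
  ultimately show ?thesis by (rule that)
qed

definition neumann_quotient :: "real \<Rightarrow> (real \<Rightarrow> complex) \<Rightarrow> (real \<Rightarrow> complex) \<Rightarrow> real" where
  "neumann_quotient \<eta> u v = (LINT t:{0<..}|lborel. (cmod (v t))\<^sup>2 + (t + \<eta>)\<^sup>2 * (cmod (u t))\<^sup>2)
    / (LINT t:{0<..}|lborel. (cmod (u t))\<^sup>2)"

definition magnetic_quotient :: "real \<Rightarrow> real \<Rightarrow> (real \<Rightarrow> complex) \<Rightarrow> (real \<Rightarrow> complex) \<Rightarrow> real" where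
  "magnetic_quotient a \<xi> f g = (LINT t|lborel. (cmod (g t))\<^sup>2 + (\<xi> + sigma a t * t)\<^sup>2 * (cmod (f t))\<^sup>2)
    / (LINT t|lborel. (cmod (f t))\<^sup>2)"

lemma lambdaN_greatest:
  assumes "\<And>u v. B1_pair {0<..} u v \<Longrightarrow> (LINT t:{0<..}|lborel. (cmod (u t))\<^sup>2) \<noteq> 0
    \<Longrightarrow> b \<le> neumann_quotient \<eta> u v"
  shows "b \<le> lambdaN \<eta>"
proof -
  obtain u v where "B1_pair {0<..} u v" "(LINT t:{0<..}|lborel. (cmod (u t))\<^sup>2) \<noteq> 0"
    by (rule exists_B1_pair_half_line)
  then show ?thesis
    unfolding lambdaN_def by (intro cInf_greatest) (use assms in \<open>auto simp: neumann_quotient_def\<close>)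
qed

lemma lambdaN_ge: "1 / 12 \<le> lambdaN \<eta>"
proof (rule lambdaN_greatest)
  fix u v assume uv: "B1_pair {0<..} u v" "(LINT t:{0<..}|lborel. (cmod (u t))\<^sup>2) \<noteq> 0"
  interpret half_line_B1 "zero_extension u" "zero_extension v"
    by (rule B1_pair_half_line_zero_extension[OF uv(1)])
  have "(LINT t:{0<..}|lborel. (cmod (u t))\<^sup>2)
      \<le> 12 * (LINT t:{0<..}|lborel. (cmod (v t))\<^sup>2 + (t + \<eta>)\<^sup>2 * (cmod (u t))\<^sup>2)"
    using norm_sq_le_energy by (simp add: set_integral_half_line_zero_extension)
  moreover have "0 \<le> (LINT t:{0<..}|lborel. (cmod (u t))\<^sup>2)"
    unfolding set_lebesgue_integral_def by (intro integral_nonneg_AE) auto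
  ultimately show "1 / 12 \<le> neumann_quotient \<eta> u v"
    using uv(2) unfolding neumann_quotient_def by (simp add: field_simps)
qed

lemma Theta0_ge: "1 / 12 \<le> Theta0"
  unfolding Theta0_def by (rule cInf_greatest) (use lambdaN_ge in auto)

lemma exists_B1_pair_line:
  obtains f g where "B1_pair UNIV f g" "(LINT t|lborel. (cmod (f t))\<^sup>2) \<noteq> 0"
proof -
  obtain u v where uv: "B1_pair {0<..} u v" "(LINT t:{0<..}|lborel. (cmod (u t))\<^sup>2) \<noteq> 0"
    by (rule exists_B1_pair_half_line)
  interpret half_line_B1 "zero_extension u" "zero_extension v"
    by (rule B1_pair_half_line_zero_extension[OF uv(1)])
  show ?thesis
    using that[OF B1_pair_glued[of 1]] integral_norm_glued(2)[of 1] uv(2)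
    by (simp add: set_integral_half_line_zero_extension)
qed

lemma magnetic_quotient_nonneg: "0 \<le> magnetic_quotient a \<xi> f g"
  unfolding magnetic_quotient_def by (intro divide_nonneg_nonneg integral_nonneg_AE) auto

lemma mu_le_magnetic_quotient:
  assumes "B1_pair UNIV f g" "(LINT t|lborel. (cmod (f t))\<^sup>2) \<noteq> 0"
  shows "mu a \<xi> \<le> magnetic_quotient a \<xi> f g"
  unfolding mu_def magnetic_quotient_def
  by (rule cInf_lower) (use assms magnetic_quotient_nonneg in \<open>auto intro!: bdd_belowI[of _ 0] simp: magnetic_quotient_def\<close>)

lemma mu_nonneg: "0 \<le> mu a \<xi>"
proof -
  obtain f g where "B1_pair UNIV f g" "(LINT t|lborel. (cmod (f t))\<^sup>2) \<noteq> 0"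
    by (rule exists_B1_pair_line)
  then show ?thesis
    unfolding mu_def
    by (intro cInf_greatest) (use magnetic_quotient_nonneg in \<open>auto simp: magnetic_quotient_def\<close>)
qed

lemma beta_le_mu: "beta a \<le> mu a \<xi>"
  unfolding beta_def by (rule cInf_lower) (auto intro: bdd_belowI[of _ 0] mu_nonneg)

lemma mu_le_glued_neumann_quotient:
  assumes "a < 0" and uv: "B1_pair {0<..} u v" "(LINT t:{0<..}|lborel. (cmod (u t))\<^sup>2) \<noteq> 0"
  shows "mu a (\<eta> * sqrt (sqrt (- a))) \<le> sqrt (- a) * neumann_quotient \<eta> u v"
proof -
  interpret half_line_B1 "zero_extension u" "zero_extension v"
    by (rule B1_pair_half_line_zero_extension[OF uv(1)])
  define r where "r = sqrt (sqrt (- a))"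
  have "0 < r" unfolding r_def using \<open>a < 0\<close> by simp
  have "r\<^sup>2 = sqrt (- a)" unfolding r_def using \<open>a < 0\<close> by simp
  have "r^4 = (r\<^sup>2)\<^sup>2" by (simp flip: power_mult)
  also have "\<dots> = - a" using \<open>r\<^sup>2 = sqrt (- a)\<close> \<open>a < 0\<close> by simp
  finally have "r^4 = - a" .
  define N where "N = (LINT t:{0<..}|lborel. (cmod (u t))\<^sup>2)"
  define Q where "Q = (LINT t:{0<..}|lborel. (cmod (v t))\<^sup>2 + (t + \<eta>)\<^sup>2 * (cmod (u t))\<^sup>2)"
  have norm: "(LBINT t. (cmod (glued r t))\<^sup>2) = (r + 1 / r^3) * N"
    using integral_norm_glued(2)[OF \<open>0 < r\<close>] unfolding N_def by (simp add: set_integral_half_line_zero_extension)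
  have energy: "(LBINT t. (cmod (glued_deriv r t))\<^sup>2 + (\<eta> * r + sigma a t * t)\<^sup>2 * (cmod (glued r t))\<^sup>2)
      = (1 / r + r^3) * Q"
    using integral_energy_glued(2)[OF \<open>0 < r\<close>, of \<eta>] \<open>r^4 = - a\<close> unfolding Q_def
    by (simp add: set_integral_half_line_zero_extension)
  have "0 < r + 1 / r^3" using \<open>0 < r\<close> by (simp add: add_pos_pos)
  then have "(LBINT t. (cmod (glued r t))\<^sup>2) \<noteq> 0" using norm uv(2) unfolding N_def by simp
  then have "mu a (\<eta> * r) \<le> magnetic_quotient a (\<eta> * r) (glued r) (glued_deriv r)"
    by (rule mu_le_magnetic_quotient[OF B1_pair_glued[OF \<open>0 < r\<close>]])
  also have "\<dots> = ((r + 1 / r^3) * (r\<^sup>2 * Q)) / ((r + 1 / r^3) * N)"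
  proof -
    have "1 / r + r^3 = r\<^sup>2 * (r + 1 / r^3)" using \<open>0 < r\<close> by (simp add: field_simps eval_nat_numeral)
    then show ?thesis unfolding magnetic_quotient_def norm energy by (simp add: ac_simps)
  qed
  also have "\<dots> = r\<^sup>2 * (Q / N)" using \<open>0 < r + 1 / r^3\<close> by simp
  finally show ?thesis
    unfolding r_def neumann_quotient_def N_def Q_def using \<open>r\<^sup>2 = sqrt (- a)\<close> r_def by simp
qed

lemma beta_le_sqrt_lambdaN:
  assumes "a < 0"
  shows "beta a \<le> sqrt (- a) * lambdaN \<eta>"
proof -
  have "beta a / sqrt (- a) \<le> lambdaN \<eta>"
  proof (rule lambdaN_greatest)
    fix u v assume "B1_pair {0<..} u v" "(LINT t:{0<..}|lborel. (cmod (u t))\<^sup>2) \<noteq> 0"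
    then have "beta a \<le> sqrt (- a) * neumann_quotient \<eta> u v"
      using beta_le_mu mu_le_glued_neumann_quotient[OF assms] order_trans by blast
    then show "beta a / sqrt (- a) \<le> neumann_quotient \<eta> u v" using assms by (simp add: field_simps)
  qed
  then show ?thesis using assms by (simp add: field_simps)
qed

lemma beta_le_sqrt_Theta0:
  assumes "a < 0"
  shows "beta a \<le> sqrt (- a) * Theta0"
proof -
  have "beta a / sqrt (- a) \<le> Theta0"
    unfolding Theta0_def
    using beta_le_sqrt_lambdaN[OF assms] assms by (intro cInf_greatest) (auto simp: field_simps)
  then show ?thesis using assms by (simp add: field_simps)
qed

theorem proposition3p1:
  fixes a :: real
  assumes "-1 < a" and "a < 0"
  shows "beta a < Theta0"
proof -
  have "sqrt (- a) < 1" using assms by simp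
  moreover have "0 < Theta0" using Theta0_ge by linarith
  ultimately have "sqrt (- a) * Theta0 < Theta0" by simp
  with beta_le_sqrt_Theta0[OF \<open>a < 0\<close>] show ?thesis by linarith
qed

end
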